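(* Let $n\ge 2$ and $i\neq j$ in $\{1,\dots,n\}$. Let $H_{ij}$ be the space of $n\times n$ complex matrices that are zero outside the entries $(k,l)$ with $k\le i$ and $l\ge j$, i.e. $H_{ij}=\operatorname{span}\{E_{kl}: k\le i,\ l\ge j\}$. Let $w$ be the permutation matrix that has $e_n$ in column $j$, $e_1$ in column $i$, and the remaining vectors $e_{n-1},e_{n-2},\dots,e_2$ placed in decreasing order in the remaining columns (from left to right). Then $X_{H_{ij}}=Y_w$, where $X_{H_{ij}}=\{[g]\in GL_n(\mathbb{C})/B: g^{-1}E_{1n}g\in H_{ij}\}$.
   Context: $B$ is the group of invertible upper-triangular $n\times n$ complex matrices; $[g]\in GL_n(\mathbb{C})/B$ denotes the flag whose $k$-dimensional subspace is spanned by the first $k$ columns of $g$. $E_{kl}$ is the matrix unit with $1$ in entry $(k,l)$ and zeros elsewhere; $e_1,\dots,e_n$ is the standard basis of $\mathbb{C}^n$. For a permutation matrix $w$, the Schubert variety $Y_w$ is the closure of $\{[bw]: b\in B\}$. *)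

theory Defs
  imports "HOL-Analysis.Analysis"
begin

text \<open>Complex n x n matrices are represented as functions nat => nat => complex,
  with entries indexed by 1..n and all other entries zero. The topology on
  matrices is the (product) topology of nat => nat => complex, restricted to
  such functions; this is the Euclidean topology of C^(n*n).\<close>

type_synonym cmat = "nat \<Rightarrow> nat \<Rightarrow> complex"

definition is_mat :: "nat \<Rightarrow> cmat \<Rightarrow> bool" where
  "is_mat n A \<longleftrightarrow> (\<forall>k l. A k l \<noteq> 0 \<longrightarrow> k \<in> {1..n} \<and> l \<in> {1..n})"

definition mat_mult :: "nat \<Rightarrow> cmat \<Rightarrow> cmat \<Rightarrow> cmat" where
  "mat_mult n A C = (\<lambda>k l. if k \<in> {1..n} \<and> l \<in> {1..n} then (\<Sum>m=1..n. A k m * C m l) else 0)"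

definition idm :: "nat \<Rightarrow> cmat" where
  "idm n = (\<lambda>k l. if k = l \<and> k \<in> {1..n} then 1 else 0)"

definition GL :: "nat \<Rightarrow> cmat set" where
  "GL n = {g. is_mat n g \<and> (\<exists>h. is_mat n h \<and> mat_mult n g h = idm n \<and> mat_mult n h g = idm n)}"

definition minv :: "nat \<Rightarrow> cmat \<Rightarrow> cmat" where
  "minv n g = (THE h. is_mat n h \<and> mat_mult n g h = idm n \<and> mat_mult n h g = idm n)"

definition Borel :: "nat \<Rightarrow> cmat set" where
  "Borel n = {b \<in> GL n. \<forall>k l. l < k \<longrightarrow> b k l = 0}"

definition flag_of :: "nat \<Rightarrow> cmat \<Rightarrow> cmat set" where
  "flag_of n g = {mat_mult n g b | b. b \<in> Borel n}"

definition FlagVar :: "nat \<Rightarrow> cmat set set" where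
  "FlagVar n = flag_of n ` GL n"

definition flag_top :: "nat \<Rightarrow> cmat set topology" where
  "flag_top n = topology (\<lambda>U. U \<subseteq> FlagVar n \<and> openin (top_of_set (GL n)) (\<Union>U))"

definition Eunit :: "nat \<Rightarrow> nat \<Rightarrow> cmat" where
  "Eunit k l = (\<lambda>a b. if a = k \<and> b = l then 1 else 0)"

definition Hsp :: "nat \<Rightarrow> nat \<Rightarrow> nat \<Rightarrow> cmat set" where
  "Hsp n i j = {A. is_mat n A \<and> (\<forall>k l. A k l \<noteq> 0 \<longrightarrow> k \<le> i \<and> j \<le> l)}"

definition XH :: "nat \<Rightarrow> cmat set \<Rightarrow> cmat set set" where
  "XH n H = {flag_of n g | g. g \<in> GL n \<and> mat_mult n (minv n g) (mat_mult n (Eunit 1 n) g) \<in> H}"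

definition perm_mat :: "nat \<Rightarrow> (nat \<Rightarrow> nat) \<Rightarrow> cmat" where
  "perm_mat n \<sigma> = (\<lambda>k l. if l \<in> {1..n} \<and> k = \<sigma> l then 1 else 0)"

text \<open>sigma(j) = n, sigma(i) = 1, the remaining columns (left to right) get
  n-1, n-2, ..., 2: the r-th remaining column gets n - r.\<close>
definition w_sigma :: "nat \<Rightarrow> nat \<Rightarrow> nat \<Rightarrow> nat \<Rightarrow> nat" where
  "w_sigma n i j c = (if c = j then n else if c = i then 1
     else n - card {c' \<in> {1..c}. c' \<noteq> i \<and> c' \<noteq> j})"

definition w_ij :: "nat \<Rightarrow> nat \<Rightarrow> nat \<Rightarrow> cmat" where
  "w_ij n i j = perm_mat n (w_sigma n i j)"

definition Schubert :: "nat \<Rightarrow> cmat \<Rightarrow> cmat set set" where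
  "Schubert n w = (flag_top n) closure_of {flag_of n (mat_mult n b w) | b. b \<in> Borel n}"

end

theory Submission
  imports Defs "Jordan_Normal_Form.Determinant"
begin

text \<open>The matrix \<open>g\<^sup>-\<^sup>1 E\<^sub>1\<^sub>n g\<close> is the outer product of the first column \<open>u\<close> of \<open>g\<^sup>-\<^sup>1\<close> and
  the last row \<open>r\<close> of \<open>g\<close>, so \<open>[g] \<in> X\<^sub>H\<close> iff \<open>u\<^sub>a = 0\<close> for \<open>a > i\<close> and \<open>r\<^sub>l = 0\<close> for
  \<open>l < j\<close>. This condition is closed, stable under right multiplication by \<open>B\<close>, and holds on
  \<open>BwB\<close>; hence \<open>Y\<^sub>w \<subseteq> X\<^sub>H\<close>.

  Conversely every \<open>g\<close> satisfying it is a limit of elements of \<open>BwB\<close>. The closure of \<open>BwB\<close>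
  is stable under multiplication by \<open>B\<close> on both sides and contains \<open>g\<close> as soon as it contains
  \<open>g (1 + t v x\<^sup>T)\<close> for all small \<open>t \<noteq> 0\<close>. With these moves one first reaches the normal
  form where column \<open>i\<close> is \<open>e\<^sub>1\<close>, column \<open>j\<close> is \<open>e\<^sub>n\<close> and row \<open>n\<close> is \<open>e\<^sub>j\<^sup>T\<close>, and then
  brings the columns, from left to right, into the echelon shape of \<open>w\<close>, perturbing a vanishing
  pivot into a nonzero one. Finally, by the definition of the quotient topology, \<open>Y\<^sub>w\<close> is the
  image in \<open>GL\<^sub>n/B\<close> of the closure of \<open>BwB\<close> in \<open>GL\<^sub>n\<close>.\<close>

declare One_nat_def[simp del]

lemma sum_eq_single:
  assumes "finite A" "l \<in> A" "\<And>m. m \<in> A \<Longrightarrow> m \<noteq> l \<Longrightarrow> f m = 0"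
  shows "sum f A = f l"
proof -
  have "sum f A = f l + sum f (A - {l})" using assms by (simp add: sum.remove)
  also have "sum f (A - {l}) = 0" using assms by (intro sum.neutral) auto
  finally show ?thesis by simp
qed

lemma mat_mult_apply:
  "k \<in> {1..n} \<Longrightarrow> l \<in> {1..n} \<Longrightarrow> mat_mult n A C k l = (\<Sum>m=1..n. A k m * C m l)"
  by (simp add: mat_mult_def)

lemma mat_mult_outside: "\<not> (k \<in> {1..n} \<and> l \<in> {1..n}) \<Longrightarrow> mat_mult n A C k l = 0"
  unfolding mat_mult_def by auto

lemma is_mat_mat_mult [simp]: "is_mat n (mat_mult n A C)"
  by (auto simp: is_mat_def mat_mult_def)

lemma is_matD: "is_mat n A \<Longrightarrow> \<not> (k \<in> {1..n} \<and> l \<in> {1..n}) \<Longrightarrow> A k l = 0"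
  by (auto simp: is_mat_def)

lemma mat_mult_assoc: "mat_mult n (mat_mult n A B) C = mat_mult n A (mat_mult n B C)"
proof (intro ext)
  fix k l
  show "mat_mult n (mat_mult n A B) C k l = mat_mult n A (mat_mult n B C) k l"
  proof (cases "k \<in> {1..n} \<and> l \<in> {1..n}")
    case True
    have "mat_mult n (mat_mult n A B) C k l = (\<Sum>m=1..n. (\<Sum>p=1..n. A k p * B p m) * C m l)"
      using True by (auto simp: mat_mult_def intro!: sum.cong)
    also have "\<dots> = (\<Sum>p=1..n. A k p * (\<Sum>m=1..n. B p m * C m l))"
      by (simp add: sum_distrib_left sum_distrib_right mult.assoc) (rule sum.swap)
    also have "\<dots> = mat_mult n A (mat_mult n B C) k l"
      using True by (auto simp: mat_mult_def intro!: sum.cong)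
    finally show ?thesis .
  qed (simp add: mat_mult_outside)
qed

lemma is_mat_idm [simp]: "is_mat n (idm n)"
  by (auto simp: is_mat_def idm_def)

lemma sum_mult_idm: "a \<in> {1..n} \<Longrightarrow> (\<Sum>m=1..n. f m * idm n m a) = f a"
  by (rule trans[OF sum_eq_single[of _ a]]) (auto simp: idm_def)

lemma sum_idm_mult: "a \<in> {1..n} \<Longrightarrow> (\<Sum>m=1..n. idm n a m * f m) = f a"
  by (rule trans[OF sum_eq_single[of _ a]]) (auto simp: idm_def)

lemma mat_mult_idm_right:
  assumes "is_mat n A" shows "mat_mult n A (idm n) = A"
proof (intro ext)
  fix k l show "mat_mult n A (idm n) k l = A k l"
    by (cases "k \<in> {1..n} \<and> l \<in> {1..n}")
      (simp_all add: mat_mult_apply sum_mult_idm mat_mult_outside is_matD[OF assms])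
qed

lemma mat_mult_idm_left:
  assumes "is_mat n A" shows "mat_mult n (idm n) A = A"
proof (intro ext)
  fix k l show "mat_mult n (idm n) A k l = A k l"
    by (cases "k \<in> {1..n} \<and> l \<in> {1..n}")
      (simp_all add: mat_mult_apply sum_idm_mult mat_mult_outside is_matD[OF assms])
qed

lemma left_inverse_eq_right_inverse:
  assumes "is_mat n h" "is_mat n h'" "mat_mult n h g = idm n" "mat_mult n g h' = idm n"
  shows "h = h'"
proof -
  have "h = mat_mult n h (mat_mult n g h')" using assms by (simp add: mat_mult_idm_right)
  also have "\<dots> = mat_mult n (mat_mult n h g) h'" by (simp add: mat_mult_assoc)
  also have "\<dots> = h'" using assms by (simp add: mat_mult_idm_left)
  finally show ?thesis .
qed

lemma GL_D:
  assumes "g \<in> GL n"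
  shows "is_mat n g" "is_mat n (minv n g)"
    "mat_mult n g (minv n g) = idm n" "mat_mult n (minv n g) g = idm n"
proof -
  obtain h where h: "is_mat n h" "mat_mult n g h = idm n" "mat_mult n h g = idm n"
    using assms by (auto simp: GL_def)
  have "minv n g = h" unfolding minv_def
    by (rule the_equality) (use h left_inverse_eq_right_inverse in auto)
  then show "is_mat n (minv n g)" "mat_mult n g (minv n g) = idm n" "mat_mult n (minv n g) g = idm n"
    using h by auto
  show "is_mat n g" using assms by (simp add: GL_def)
qed

lemma minv_eqI: "g \<in> GL n \<Longrightarrow> is_mat n h \<Longrightarrow> mat_mult n g h = idm n \<Longrightarrow> minv n g = h"
  using left_inverse_eq_right_inverse[of n "minv n g" h g] GL_D[of g n] by auto

lemma GL_I:
  "is_mat n g \<Longrightarrow> is_mat n h \<Longrightarrow> mat_mult n g h = idm n \<Longrightarrow> mat_mult n h g = idm n \<Longrightarrow> g \<in> GL n"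
  by (auto simp: GL_def)

lemma idm_in_GL [simp]: "idm n \<in> GL n"
  by (rule GL_I[where h="idm n"]) (auto simp: mat_mult_idm_left)

lemma mat_mult_cancel_right:
  "g \<in> GL n \<Longrightarrow> is_mat n h \<Longrightarrow> mat_mult n (mat_mult n h g) (minv n g) = h"
  by (simp add: mat_mult_assoc GL_D mat_mult_idm_right)

lemma mat_mult_cancel_left:
  "g \<in> GL n \<Longrightarrow> is_mat n h \<Longrightarrow> mat_mult n (minv n g) (mat_mult n g h) = h"
  by (simp add: mat_mult_assoc[symmetric] GL_D mat_mult_idm_left)

lemma GL_mat_mult:
  assumes "g \<in> GL n" "h \<in> GL n"
  shows "mat_mult n g h \<in> GL n" and minv_mat_mult: "minv n (mat_mult n g h) = mat_mult n (minv n h) (minv n g)"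
proof -
  have right: "mat_mult n (mat_mult n g h) (mat_mult n (minv n h) (minv n g)) = idm n"
    using assms by (simp add: mat_mult_assoc[symmetric] mat_mult_cancel_right GL_D)
  have left: "mat_mult n (mat_mult n (minv n h) (minv n g)) (mat_mult n g h) = idm n"
    using assms by (simp add: mat_mult_assoc[symmetric])
      (simp add: mat_mult_assoc mat_mult_cancel_left GL_D mat_mult_idm_left)
  show "mat_mult n g h \<in> GL n" using right left by (intro GL_I) auto
  then show "minv n (mat_mult n g h) = mat_mult n (minv n h) (minv n g)"
    using right by (intro minv_eqI) auto
qed

lemma GL_minv: "g \<in> GL n \<Longrightarrow> minv n g \<in> GL n"
  by (intro GL_I[where h=g]) (auto simp: GL_D)

subsection \<open>Rank-one perturbations of the identity\<close>

definition basis_vec :: "nat \<Rightarrow> nat \<Rightarrow> complex" where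
  "basis_vec m = (\<lambda>a. if a = m then 1 else 0)"

definition dot :: "nat \<Rightarrow> (nat \<Rightarrow> complex) \<Rightarrow> (nat \<Rightarrow> complex) \<Rightarrow> complex" where
  "dot n x v = (\<Sum>c=1..n. x c * v c)"

definition id_plus_outer :: "nat \<Rightarrow> (nat \<Rightarrow> complex) \<Rightarrow> (nat \<Rightarrow> complex) \<Rightarrow> cmat" where
  "id_plus_outer n v x = (\<lambda>a b. if a \<in> {1..n} \<and> b \<in> {1..n} then idm n a b + v a * x b else 0)"

lemma is_mat_id_plus_outer [simp]: "is_mat n (id_plus_outer n v x)"
  by (auto simp: is_mat_def id_plus_outer_def)

lemma sum_mult_basis_vec: "m \<in> {1..n} \<Longrightarrow> (\<Sum>c=1..n. f c * basis_vec m c) = f m"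
  by (rule trans[OF sum_eq_single[of _ m]]) (auto simp: basis_vec_def)

lemma sum_basis_vec_mult: "m \<in> {1..n} \<Longrightarrow> (\<Sum>c=1..n. basis_vec m c * f c) = f m"
  by (rule trans[OF sum_eq_single[of _ m]]) (auto simp: basis_vec_def)

lemma dot_basis_vec_left: "m \<in> {1..n} \<Longrightarrow> dot n (basis_vec m) v = v m"
  by (simp add: dot_def sum_basis_vec_mult)

lemma dot_basis_vec_right: "m \<in> {1..n} \<Longrightarrow> dot n x (basis_vec m) = x m"
  by (simp add: dot_def sum_mult_basis_vec)

lemma dot_scale_right: "dot n x (\<lambda>a. s * v a) = s * dot n x v"
  by (simp add: dot_def sum_distrib_left algebra_simps)

lemma mat_mult_id_plus_outer_apply:
  assumes "a \<in> {1..n}" "b \<in> {1..n}"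
  shows "mat_mult n g (id_plus_outer n v x) a b = g a b + (\<Sum>c=1..n. g a c * v c) * x b"
proof -
  have "mat_mult n g (id_plus_outer n v x) a b = (\<Sum>m=1..n. g a m * idm n m b + g a m * v m * x b)"
    using assms by (auto simp: mat_mult_apply id_plus_outer_def algebra_simps intro!: sum.cong)
  also have "\<dots> = g a b + (\<Sum>c=1..n. g a c * v c) * x b"
    using assms by (simp add: sum.distrib sum_mult_idm sum_distrib_right)
  finally show ?thesis .
qed

lemma id_plus_outer_mat_mult_apply:
  assumes "a \<in> {1..n}" "b \<in> {1..n}"
  shows "mat_mult n (id_plus_outer n v x) g a b = g a b + v a * (\<Sum>c=1..n. x c * g c b)"
proof -
  have "mat_mult n (id_plus_outer n v x) g a b = (\<Sum>m=1..n. idm n a m * g m b + v a * (x m * g m b))"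
    using assms by (auto simp: mat_mult_apply id_plus_outer_def algebra_simps intro!: sum.cong)
  also have "\<dots> = g a b + v a * (\<Sum>c=1..n. x c * g c b)"
    using assms by (simp add: sum.distrib sum_idm_mult sum_distrib_left)
  finally show ?thesis .
qed

lemma id_plus_outer_mult:
  "mat_mult n (id_plus_outer n v x) (id_plus_outer n v' x) =
     id_plus_outer n (\<lambda>a. v a + v' a + dot n x v' * v a) x"
proof (intro ext)
  fix a b
  show "mat_mult n (id_plus_outer n v x) (id_plus_outer n v' x) a b =
     id_plus_outer n (\<lambda>a. v a + v' a + dot n x v' * v a) x a b"
  proof (cases "a \<in> {1..n} \<and> b \<in> {1..n}")
    case True
    have "(\<Sum>c=1..n. x c * id_plus_outer n v' x c b) = (\<Sum>c=1..n. x c * idm n c b + x c * v' c * x b)"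
      using True by (auto simp: id_plus_outer_def algebra_simps intro!: sum.cong)
    also have "\<dots> = x b + dot n x v' * x b"
      using True by (simp add: sum.distrib sum_mult_idm dot_def sum_distrib_right)
    finally show ?thesis
      using True by (simp add: id_plus_outer_mat_mult_apply) (simp add: id_plus_outer_def algebra_simps)
  qed (auto simp: mat_mult_outside id_plus_outer_def)
qed

lemma id_plus_outer_eq_idm: "(\<And>a b. v a * x b = 0) \<Longrightarrow> id_plus_outer n v x = idm n"
  by (auto simp: id_plus_outer_def idm_def fun_eq_iff)

lemma id_plus_outer_GL:
  assumes "1 + dot n x v \<noteq> 0"
  shows "id_plus_outer n v x \<in> GL n"
    and minv_id_plus_outer: "minv n (id_plus_outer n v x) = id_plus_outer n (\<lambda>a. - v a / (1 + dot n x v)) x"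
proof -
  define s where "s = - 1 / (1 + dot n x v)"
  have s: "1 + s * (1 + dot n x v) = 0" using assms by (simp add: s_def)
  have coeff: "v a + s * v a + s * dot n x v * v a = 0" for a
  proof -
    have "v a + s * v a + s * dot n x v * v a = v a * (1 + s * (1 + dot n x v))"
      by (simp add: algebra_simps)
    then show ?thesis using s by simp
  qed
  have right: "mat_mult n (id_plus_outer n v x) (id_plus_outer n (\<lambda>a. s * v a) x) = idm n"
    unfolding id_plus_outer_mult dot_scale_right by (rule id_plus_outer_eq_idm) (use coeff in simp)
  have left: "mat_mult n (id_plus_outer n (\<lambda>a. s * v a) x) (id_plus_outer n v x) = idm n"
    unfolding id_plus_outer_mult by (rule id_plus_outer_eq_idm) (use coeff in \<open>simp add: algebra_simps\<close>)
  show G: "id_plus_outer n v x \<in> GL n" using right left by (intro GL_I) auto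
  have "(\<lambda>a. s * v a) = (\<lambda>a. - v a / (1 + dot n x v))" by (auto simp: s_def)
  then show "minv n (id_plus_outer n v x) = id_plus_outer n (\<lambda>a. - v a / (1 + dot n x v)) x"
    using minv_eqI[OF G _ right] by simp
qed

lemma mat_mult_column_op_apply:
  assumes g: "is_mat n g" and m: "m \<in> {1..n}" and x: "\<And>b. b \<notin> {1..n} \<Longrightarrow> x b = 0"
  shows "mat_mult n g (id_plus_outer n (basis_vec m) x) a b = g a b + g a m * x b"
proof (cases "a \<in> {1..n} \<and> b \<in> {1..n}")
  case True
  then show ?thesis using m by (simp add: mat_mult_id_plus_outer_apply sum_mult_basis_vec)
next
  case False
  then have "g a b = 0" "g a m * x b = 0" using is_matD[OF g] x by auto
  then show ?thesis using False by (simp add: mat_mult_outside)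
qed

lemma column_op_GL:
  assumes "g \<in> GL n" "m \<in> {1..n}" "x m = 0"
  shows "mat_mult n g (id_plus_outer n (basis_vec m) x) \<in> GL n"
  using assms by (intro GL_mat_mult id_plus_outer_GL) (simp_all add: dot_basis_vec_right)

lemma minv_mult_transvection_apply:
  assumes g: "g \<in> GL n" and d: "dot n x v = 0" and a: "a \<in> {1..n}" and l: "l \<in> {1..n}"
  shows "minv n (mat_mult n g (id_plus_outer n v x)) a l =
    minv n g a l - v a * (\<Sum>c=1..n. x c * minv n g c l)"
proof -
  have G: "id_plus_outer n v x \<in> GL n" using d by (intro id_plus_outer_GL) simp
  have "minv n (mat_mult n g (id_plus_outer n v x)) = mat_mult n (minv n (id_plus_outer n v x)) (minv n g)"
    by (rule minv_mat_mult[OF g G])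
  also have "minv n (id_plus_outer n v x) = id_plus_outer n (\<lambda>a. - v a) x"
    using minv_id_plus_outer[of n x v] d by simp
  finally show ?thesis using a l by (simp add: id_plus_outer_mat_mult_apply)
qed

lemma Borel_I: "g \<in> GL n \<Longrightarrow> (\<And>k l. l < k \<Longrightarrow> g k l = 0) \<Longrightarrow> g \<in> Borel n"
  by (auto simp: Borel_def)

lemma Borel_D: "b \<in> Borel n \<Longrightarrow> b \<in> GL n" "b \<in> Borel n \<Longrightarrow> l < k \<Longrightarrow> b k l = 0"
  by (auto simp: Borel_def)

lemma id_plus_outer_Borel:
  assumes "1 + dot n x v \<noteq> 0"
    and "\<And>a b. a \<in> {1..n} \<Longrightarrow> b \<in> {1..n} \<Longrightarrow> b < a \<Longrightarrow> v a * x b = 0"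
  shows "id_plus_outer n v x \<in> Borel n"
proof (rule Borel_I[OF id_plus_outer_GL(1)[OF assms(1)]])
  fix k l :: nat assume "l < k"
  then show "id_plus_outer n v x k l = 0" using assms(2)[of k l] by (auto simp: id_plus_outer_def idm_def)
qed

lemma idm_Borel [simp]: "idm n \<in> Borel n"
  by (intro Borel_I idm_in_GL) (auto simp: idm_def)

lemma Borel_mat_mult:
  assumes "b \<in> Borel n" "b' \<in> Borel n"
  shows "mat_mult n b b' \<in> Borel n"
proof (intro Borel_I)
  show "mat_mult n b b' \<in> GL n" using assms by (auto intro: GL_mat_mult dest: Borel_D)
  fix k l :: nat assume kl: "l < k"
  have entry: "b k m * b' m l = 0" for m
    using Borel_D(2)[OF assms(1), of m k] Borel_D(2)[OF assms(2), of l m] kl by (cases "m < k") auto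
  show "mat_mult n b b' k l = 0" unfolding mat_mult_def by (simp only: entry sum.neutral_const if_cancel)
qed

definition to_mat :: "nat \<Rightarrow> cmat \<Rightarrow> complex mat" where
  "to_mat n A = mat n n (\<lambda>(a,b). A (Suc a) (Suc b))"

lemma to_mat_carrier [simp]: "to_mat n A \<in> carrier_mat n n"
  by (simp add: to_mat_def)

lemma to_mat_mult: "to_mat n (mat_mult n A C) = to_mat n A * to_mat n C"
proof (rule eq_matI)
  fix a b assume "a < dim_row (to_mat n A * to_mat n C)" "b < dim_col (to_mat n A * to_mat n C)"
  then have ab: "a < n" "b < n" by (auto simp: to_mat_def)
  have "to_mat n (mat_mult n A C) $$ (a, b) = (\<Sum>m=Suc 0..n. A (Suc a) m * C m (Suc b))"
    using ab by (simp add: to_mat_def mat_mult_apply One_nat_def)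
  also have "\<dots> = (\<Sum>m<n. A (Suc a) (Suc m) * C (Suc m) (Suc b))" by (rule sum.atLeast1_atMost_eq)
  also have "\<dots> = (to_mat n A * to_mat n C) $$ (a, b)"
    using ab by (simp add: to_mat_def scalar_prod_def atLeast0LessThan)
  finally show "to_mat n (mat_mult n A C) $$ (a, b) = (to_mat n A * to_mat n C) $$ (a, b)" .
qed (auto simp: to_mat_def)

lemma to_mat_idm: "to_mat n (idm n) = 1\<^sub>m n"
  by (rule eq_matI) (auto simp: to_mat_def idm_def)

lemma det_to_mat_GL:
  assumes "g \<in> GL n" shows "det (to_mat n g) \<noteq> 0"
proof -
  have "det (to_mat n g) * det (to_mat n (minv n g)) = 1"
    using det_mult[OF to_mat_carrier to_mat_carrier, of n g "minv n g"] assms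
    by (simp add: to_mat_mult[symmetric] GL_D to_mat_idm)
  then show ?thesis by (metis mult_zero_left zero_neq_one)
qed

lemma det_to_mat_zero_block:
  assumes R: "R \<subseteq> {1..n}" and C: "C \<subseteq> {1..n}" and card: "n < card R + card C"
    and zero: "\<And>a b. a \<in> R \<Longrightarrow> b \<in> C \<Longrightarrow> g a b = 0"
  shows "det (to_mat n g) = 0"
proof -
  define R' where "R' = Suc -` R"
  define C' where "C' = Suc -` C"
  have range_Suc: "X \<subseteq> range Suc" if "X \<subseteq> {1..n}" for X
  proof
    fix x assume "x \<in> X"
    then have "x = Suc (x - 1)" using that by auto
    then show "x \<in> range Suc" by (rule range_eqI)
  qed
  have card': "card R' = card R" "card C' = card C"
    unfolding R'_def C'_def using range_Suc[OF R] range_Suc[OF C] by (auto intro!: card_vimage_inj)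
  have sub: "R' \<subseteq> {0..<n}" "C' \<subseteq> {0..<n}" using R C by (auto simp: R'_def C'_def)
  then have fin: "finite R'" "finite C'" by (auto intro: finite_subset)
  have term_zero: "signof p * (\<Prod>a=0..<n. to_mat n g $$ (a, p a)) = 0" if p: "p permutes {0..<n}" for p
  proof -
    have "\<exists>a\<in>R'. p a \<in> C'"
    proof (rule ccontr)
      assume "\<not> ?thesis"
      then have "card (p ` R' \<union> C') = card (p ` R') + card C'"
        using fin by (intro card_Un_disjoint) auto
      also have "card (p ` R') = card R'"
        by (rule card_image[OF inj_on_subset[OF permutes_inj[OF p] subset_UNIV]])
      finally have "card (p ` R' \<union> C') = card R + card C" using card' by simp
      moreover have "card (p ` R' \<union> C') \<le> card {0..<n}"
        using sub p by (intro card_mono) (auto simp: permutes_in_image)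
      ultimately show False using card by simp
    qed
    then obtain a where a: "a \<in> R'" "p a \<in> C'" by blast
    moreover have "a < n" "p a < n" using a sub by auto
    ultimately have "to_mat n g $$ (a, p a) = 0" by (simp add: to_mat_def R'_def C'_def zero)
    then show ?thesis using a sub by (subst prod_zero) auto
  qed
  show ?thesis unfolding det_def'[OF to_mat_carrier] by (intro sum.neutral ballI term_zero) simp
qed

lemma GL_nonzero_in_block:
  assumes "g \<in> GL n" "R \<subseteq> {1..n}" "C \<subseteq> {1..n}" "n < card R + card C"
  shows "\<exists>a\<in>R. \<exists>b\<in>C. g a b \<noteq> 0"
  using det_to_mat_zero_block[OF assms(2-4), of g] det_to_mat_GL[OF assms(1)] by blast

lemma Borel_diag_nonzero:
  assumes "b \<in> Borel n" "c \<in> {1..n}"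
  shows "b c c \<noteq> 0"
proof
  assume zero: "b c c = 0"
  have "\<exists>a\<in>{c..n}. \<exists>l\<in>{1..c}. b a l \<noteq> 0"
    using assms by (intro GL_nonzero_in_block) (auto dest: Borel_D)
  then obtain a l where al: "c \<le> a" "l \<le> c" "b a l \<noteq> 0" by auto
  show False
  proof (cases "l < a")
    case True then show False using Borel_D(2)[OF assms(1) True] al by simp
  next
    case False then have "a = c" "l = c" using al by auto
    then show False using zero al by simp
  qed
qed

lemma Borel_minv:
  assumes b: "b \<in> Borel n"
  shows "minv n b \<in> Borel n"
proof (intro Borel_I)
  have G: "b \<in> GL n" using b by (rule Borel_D)
  then show "minv n b \<in> GL n" by (rule GL_minv)
  have "\<forall>a. l < a \<longrightarrow> minv n b a l = 0" for l
  proof (induction l rule: less_induct)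
    case (less l)
    show ?case
    proof (intro allI impI)
      fix a assume la: "l < a"
      show "minv n b a l = 0"
      proof (cases "a \<in> {1..n} \<and> l \<in> {1..n}")
        case True
        have "0 = mat_mult n (minv n b) b a l" using G la True by (simp add: GL_D idm_def)
        also have "\<dots> = minv n b a l * b l l"
          unfolding mat_mult_apply[OF conjunct1[OF True] conjunct2[OF True]]
        proof (rule sum_eq_single)
          fix m assume "m \<in> {1..n}" "m \<noteq> l"
          then show "minv n b a m * b m l = 0"
            using less.IH[of m] la Borel_D(2)[OF b, of l m] by (cases "m < l") auto
        qed (use True in auto)
        finally show ?thesis using Borel_diag_nonzero[OF b, of l] True by simp
      qed (use is_matD[OF GL_D(2)[OF G]] in blast)
    qed
  qed
  then show "l < k \<Longrightarrow> minv n b k l = 0" for k l by blast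
qed

lemma continuous_on_entry: "continuous_on UNIV (\<lambda>g::cmat. g a b)"
  using continuous_on_product_then_coordinatewise[OF continuous_on_product_coordinates[of a], of b] .

lemma continuous_on_cmatI:
  "(\<And>a b. continuous_on S (\<lambda>x. F x a b)) \<Longrightarrow> continuous_on S (F :: _ \<Rightarrow> cmat)"
  by (intro continuous_on_coordinatewise_then_product)

lemma continuous_on_mat_mult_right: "continuous_on UNIV (\<lambda>g. mat_mult n g P)"
proof (rule continuous_on_cmatI)
  fix a b show "continuous_on UNIV (\<lambda>g. mat_mult n g P a b)"
    by (cases "a \<in> {1..n} \<and> b \<in> {1..n}")
      (auto simp: mat_mult_def intro!: continuous_intros continuous_on_entry)
qed

lemma continuous_on_mat_mult_left: "continuous_on UNIV (\<lambda>g. mat_mult n P g)"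
proof (rule continuous_on_cmatI)
  fix a b show "continuous_on UNIV (\<lambda>g. mat_mult n P g a b)"
    by (cases "a \<in> {1..n} \<and> b \<in> {1..n}")
      (auto simp: mat_mult_def intro!: continuous_intros continuous_on_entry)
qed

lemma continuous_on_id_plus_outer_path:
  "continuous_on UNIV (\<lambda>t::real. mat_mult n g (id_plus_outer n v (\<lambda>b. complex_of_real t * x b)))"
proof (rule continuous_on_cmatI)
  fix a b
  show "continuous_on UNIV (\<lambda>t. mat_mult n g (id_plus_outer n v (\<lambda>b. complex_of_real t * x b)) a b)"
    by (cases "a \<in> {1..n} \<and> b \<in> {1..n}")
      (auto simp: mat_mult_id_plus_outer_apply mat_mult_outside sum_distrib_right
        intro!: continuous_intros)
qed

lemma continuous_on_det:
  assumes "\<And>a b. continuous_on UNIV (\<lambda>g. F g a b)"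
  shows "continuous_on UNIV (\<lambda>g::cmat. det (mat m m (\<lambda>(a,b). F g a b)) :: complex)"
proof -
  have "det (mat m m (\<lambda>(a,b). F g a b)) =
     (\<Sum>p\<in>{p. p permutes {0..<m}}. signof p * (\<Prod>a=0..<m. F g a (p a)))" for g
    by (subst det_def'[of _ m]) (auto intro!: sum.cong prod.cong dest: permutes_in_image)
  then show ?thesis by (simp only:) (intro continuous_intros assms)
qed

lemma minv_entry_mult_det:
  assumes g: "g \<in> GL n" and k: "k \<in> {1..n}" and l: "l \<in> {1..n}"
  shows "det (replace_col (to_mat n g) (unit_vec n (l - 1)) (k - 1)) = minv n g k l * det (to_mat n g)"
proof -
  define x where "x = vec n (\<lambda>a. minv n g (Suc a) l)"
  have x: "x \<in> carrier_vec n" by (simp add: x_def)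
  have "to_mat n g *\<^sub>v x = unit_vec n (l - 1)"
  proof (rule eq_vecI)
    fix a assume "a < dim_vec (unit_vec n (l - 1))"
    then have a: "a < n" by simp
    have "(to_mat n g *\<^sub>v x) $ a = (\<Sum>b<n. g (Suc a) (Suc b) * minv n g (Suc b) l)"
      using a by (simp add: to_mat_def x_def scalar_prod_def atLeast0LessThan)
    also have "\<dots> = mat_mult n g (minv n g) (Suc a) l"
      using a l by (simp add: mat_mult_apply sum.atLeast1_atMost_eq One_nat_def)
    also have "\<dots> = (if a = l - 1 then 1 else 0)" using GL_D[OF g] a l by (auto simp: idm_def)
    also have "\<dots> = unit_vec n (l - 1) $ a"
    proof -
      have "l - 1 < n" using l by auto
      then show ?thesis using a by simp
    qed
    finally show "(to_mat n g *\<^sub>v x) $ a = unit_vec n (l - 1) $ a" .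
  qed (simp add: to_mat_def)
  then have "det (replace_col (to_mat n g) (unit_vec n (l - 1)) (k - 1)) = x $ (k - 1) * det (to_mat n g)"
    using cramer_lemma_mat[OF to_mat_carrier x, of "k - 1" g] k by auto
  also have "x $ (k - 1) = minv n g k l"
  proof -
    have "k - 1 < n" "Suc (k - 1) = k" using k by auto
    then show ?thesis by (simp add: x_def)
  qed
  finally show ?thesis .
qed

lemma closedin_minv_entry_eq_0:
  assumes k: "k \<in> {1..n}" and l: "l \<in> {1..n}"
  shows "closedin (top_of_set (GL n)) {g \<in> GL n. minv n g k l = 0}"
proof -
  have entries: "replace_col (to_mat n g) (unit_vec n (l - 1)) (k - 1) =
    mat n n (\<lambda>(a,b). if b = k - 1 then (if a = l - 1 then 1 else 0) else g (Suc a) (Suc b))" for g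
    using l by (intro eq_matI) (auto simp: replace_col_def to_mat_def)
  have "continuous_on UNIV (\<lambda>g::cmat.
      if b = k - 1 then (if a = l - 1 then 1 else 0) else g (Suc a) (Suc b) :: complex)" for a b
    by (cases "b = k - 1") (auto simp: continuous_on_entry)
  then have "closed {g. det (replace_col (to_mat n g) (unit_vec n (l - 1)) (k - 1)) = 0}"
    unfolding entries by (intro closed_Collect_eq continuous_on_det continuous_on_const)
  moreover have "{g \<in> GL n. minv n g k l = 0} =
      GL n \<inter> {g. det (replace_col (to_mat n g) (unit_vec n (l - 1)) (k - 1)) = 0}"
    using minv_entry_mult_det[OF _ k l] det_to_mat_GL by auto
  ultimately show ?thesis by (simp add: closedin_closed_Int)
qed

lemma mem_flag_of:
  assumes "g \<in> GL n" shows "g \<in> flag_of n g"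
proof -
  have "g = mat_mult n g (idm n)" using mat_mult_idm_right[OF GL_D(1)[OF assms]] by simp
  then show ?thesis unfolding flag_of_def using idm_Borel by blast
qed

lemma flag_of_subset_GL: "g \<in> GL n \<Longrightarrow> flag_of n g \<subseteq> GL n"
  unfolding flag_of_def by (auto intro: GL_mat_mult dest: Borel_D)

lemma flag_of_mult_Borel:
  assumes g: "g \<in> GL n" and b: "b \<in> Borel n"
  shows "flag_of n (mat_mult n g b) = flag_of n g"
proof
  show "flag_of n (mat_mult n g b) \<subseteq> flag_of n g"
    unfolding flag_of_def using b by (auto simp: mat_mult_assoc intro!: Borel_mat_mult)
  show "flag_of n g \<subseteq> flag_of n (mat_mult n g b)"
  proof
    fix h assume "h \<in> flag_of n g"
    then obtain b' where b': "b' \<in> Borel n" "h = mat_mult n g b'" by (auto simp: flag_of_def)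
    have "mat_mult n b (mat_mult n (minv n b) b') = b'"
      using b b' by (simp add: mat_mult_assoc[symmetric] GL_D Borel_D mat_mult_idm_left)
    then have "h = mat_mult n (mat_mult n g b) (mat_mult n (minv n b) b')"
      using b' by (simp add: mat_mult_assoc)
    moreover have "mat_mult n (minv n b) b' \<in> Borel n" using b b' by (intro Borel_mat_mult Borel_minv)
    ultimately show "h \<in> flag_of n (mat_mult n g b)" unfolding flag_of_def by blast
  qed
qed

lemma flag_of_eq_if_mem:
  assumes g: "g \<in> GL n" and h: "h \<in> flag_of n g"
  shows "flag_of n h = flag_of n g"
proof -
  obtain b where "b \<in> Borel n" "h = mat_mult n g b" using h by (auto simp: flag_of_def)
  then show ?thesis using flag_of_mult_Borel[OF g] by simp
qed

lemma openin_flag_top: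
  "openin (flag_top n) U \<longleftrightarrow> U \<subseteq> FlagVar n \<and> openin (top_of_set (GL n)) (\<Union>U)"
proof -
  have Int: "\<Union>(U \<inter> V) = \<Union>U \<inter> \<Union>V" if "U \<subseteq> FlagVar n" "V \<subseteq> FlagVar n" for U V
  proof
    show "\<Union>U \<inter> \<Union>V \<subseteq> \<Union>(U \<inter> V)"
    proof
      fix h assume "h \<in> \<Union>U \<inter> \<Union>V"
      then obtain x y where xy: "x \<in> U" "y \<in> V" "h \<in> x" "h \<in> y" by blast
      have "z = flag_of n h" if "z \<in> FlagVar n" "h \<in> z" for z
        using that flag_of_eq_if_mem by (auto simp: FlagVar_def)
      then have "x = flag_of n h" "y = flag_of n h" using xy that by auto
      then show "h \<in> \<Union>(U \<inter> V)" using xy by blast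
    qed
  qed blast
  have "istopology (\<lambda>U. U \<subseteq> FlagVar n \<and> openin (top_of_set (GL n)) (\<Union>U))"
    unfolding istopology_def
  proof (rule conjI; intro allI impI)
    fix U V assume "U \<subseteq> FlagVar n \<and> openin (top_of_set (GL n)) (\<Union>U)"
      "V \<subseteq> FlagVar n \<and> openin (top_of_set (GL n)) (\<Union>V)"
    then show "U \<inter> V \<subseteq> FlagVar n \<and> openin (top_of_set (GL n)) (\<Union>(U \<inter> V))"
      by (auto simp: Int)
  next
    fix K assume K: "\<forall>U\<in>K. U \<subseteq> FlagVar n \<and> openin (top_of_set (GL n)) (\<Union>U)"
    have "\<Union>(\<Union>K) = \<Union>(Union ` K)" by blast
    moreover have "openin (top_of_set (GL n)) (\<Union>(Union ` K))" using K by (intro openin_Union) auto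
    ultimately show "\<Union>K \<subseteq> FlagVar n \<and> openin (top_of_set (GL n)) (\<Union>(\<Union>K))" using K by auto
  qed
  then show ?thesis unfolding flag_top_def by (simp add: topology_inverse')
qed

lemma topspace_flag_top: "topspace (flag_top n) = FlagVar n"
proof
  show "topspace (flag_top n) \<subseteq> FlagVar n" unfolding topspace_def openin_flag_top by blast
  have "\<Union>(FlagVar n) = GL n"
    unfolding FlagVar_def using flag_of_subset_GL mem_flag_of by blast
  then have "openin (flag_top n) (FlagVar n)" unfolding openin_flag_top by simp
  then show "FlagVar n \<subseteq> topspace (flag_top n)" by (rule openin_subset)
qed

lemma openin_flag_of_image:
  assumes W: "openin (top_of_set (GL n)) W"
  shows "openin (flag_top n) (flag_of n ` W)"
proof -
  obtain U where U: "open U" "W = GL n \<inter> U" using W by (auto simp: openin_open)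
  have "\<Union>(flag_of n ` W) = (\<Union>b\<in>Borel n. GL n \<inter> (\<lambda>h. mat_mult n h (minv n b)) -` U)"
  proof (intro equalityI subsetI)
    fix h assume "h \<in> \<Union>(flag_of n ` W)"
    then obtain g b where gb: "g \<in> W" "b \<in> Borel n" "h = mat_mult n g b" by (auto simp: flag_of_def)
    then have "h \<in> GL n" "mat_mult n h (minv n b) = g"
      using U by (auto simp: mat_mult_cancel_right GL_D Borel_D intro: GL_mat_mult)
    then show "h \<in> (\<Union>b\<in>Borel n. GL n \<inter> (\<lambda>h. mat_mult n h (minv n b)) -` U)"
      using gb U by auto
  next
    fix h assume "h \<in> (\<Union>b\<in>Borel n. GL n \<inter> (\<lambda>h. mat_mult n h (minv n b)) -` U)"
    then obtain b where b: "b \<in> Borel n" "h \<in> GL n" "mat_mult n h (minv n b) \<in> U" by blast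
    then have "mat_mult n h (minv n b) \<in> W" using U by (auto intro: GL_mat_mult GL_minv Borel_D)
    moreover have "h = mat_mult n (mat_mult n h (minv n b)) b"
      using b by (simp add: mat_mult_assoc GL_D Borel_D mat_mult_idm_right)
    then have "h \<in> flag_of n (mat_mult n h (minv n b))" using b(1) unfolding flag_of_def by blast
    ultimately show "h \<in> \<Union>(flag_of n ` W)" by blast
  qed
  moreover have "openin (top_of_set (GL n)) (GL n \<inter> (\<lambda>h. mat_mult n h (minv n b)) -` U)" for b
    by (rule continuous_openin_preimage_gen[OF continuous_on_subset[OF continuous_on_mat_mult_right] U(1)])
      simp
  ultimately have "openin (top_of_set (GL n)) (\<Union>(flag_of n ` W))"
    by (simp only:) (intro openin_Union, blast)
  moreover have "W \<subseteq> GL n" using openin_subset[OF W] by simp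
  then have "flag_of n ` W \<subseteq> FlagVar n" by (auto simp: FlagVar_def)
  ultimately show ?thesis by (simp add: openin_flag_top)
qed

subsection \<open>The closure of a double coset\<close>

definition double_coset :: "nat \<Rightarrow> cmat \<Rightarrow> cmat set" where
  "double_coset n w = {mat_mult n (mat_mult n b w) b' | b b'. b \<in> Borel n \<and> b' \<in> Borel n}"

definition double_coset_closure :: "nat \<Rightarrow> cmat \<Rightarrow> cmat set" where
  "double_coset_closure n w = GL n \<inter> closure (double_coset n w)"

lemma double_coset_subset_GL: "w \<in> GL n \<Longrightarrow> double_coset n w \<subseteq> GL n"
  unfolding double_coset_def by (auto intro!: GL_mat_mult dest: Borel_D)

lemma double_coset_mult_Borel:
  assumes "h \<in> double_coset n w" "b \<in> Borel n"
  shows "mat_mult n h b \<in> double_coset n w" "mat_mult n b h \<in> double_coset n w"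
proof -
  obtain b1 b2 where b12: "b1 \<in> Borel n" "b2 \<in> Borel n" "h = mat_mult n (mat_mult n b1 w) b2"
    using assms(1) by (auto simp: double_coset_def)
  then have "mat_mult n h b = mat_mult n (mat_mult n b1 w) (mat_mult n b2 b)"
    "mat_mult n b h = mat_mult n (mat_mult n (mat_mult n b b1) w) b2"
    by (simp_all add: mat_mult_assoc)
  then show "mat_mult n h b \<in> double_coset n w" "mat_mult n b h \<in> double_coset n w"
    using b12 assms(2) unfolding double_coset_def by (blast intro: Borel_mat_mult)+
qed

lemma double_coset_closure_mult_right:
  assumes g: "g \<in> double_coset_closure n w" and b: "b \<in> Borel n"
  shows "mat_mult n g b \<in> double_coset_closure n w"
proof -
  have "(\<lambda>h. mat_mult n h b) ` double_coset n w \<subseteq> double_coset n w"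
    using b by (auto intro: double_coset_mult_Borel)
  then have "(\<lambda>h. mat_mult n h b) ` closure (double_coset n w) \<subseteq> closure (double_coset n w)"
    using closure_subset
    by (intro image_closure_subset continuous_on_subset[OF continuous_on_mat_mult_right]) auto
  then show ?thesis
    using g b by (auto simp: double_coset_closure_def intro: GL_mat_mult Borel_D)
qed

lemma double_coset_closure_mult_left:
  assumes g: "g \<in> double_coset_closure n w" and b: "b \<in> Borel n"
  shows "mat_mult n b g \<in> double_coset_closure n w"
proof -
  have "(\<lambda>h. mat_mult n b h) ` double_coset n w \<subseteq> double_coset n w"
    using b by (auto intro: double_coset_mult_Borel)
  then have "(\<lambda>h. mat_mult n b h) ` closure (double_coset n w) \<subseteq> closure (double_coset n w)"
    using closure_subset
    by (intro image_closure_subset continuous_on_subset[OF continuous_on_mat_mult_left]) auto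
  then show ?thesis
    using g b by (auto simp: double_coset_closure_def intro: GL_mat_mult Borel_D)
qed

lemma double_coset_closure_cancel_right:
  assumes "mat_mult n g b \<in> double_coset_closure n w" "b \<in> Borel n" "g \<in> GL n"
  shows "g \<in> double_coset_closure n w"
  using double_coset_closure_mult_right[OF assms(1) Borel_minv[OF assms(2)]] assms(2,3)
  by (simp add: mat_mult_cancel_right Borel_D GL_D)

lemma double_coset_closure_cancel_left:
  assumes "mat_mult n b g \<in> double_coset_closure n w" "b \<in> Borel n" "g \<in> GL n"
  shows "g \<in> double_coset_closure n w"
  using double_coset_closure_mult_left[OF assms(1) Borel_minv[OF assms(2)]] assms(2,3)
  by (simp add: mat_mult_cancel_left Borel_D GL_D)

lemma double_coset_closure_limit:
  assumes g: "g \<in> GL n" and cont: "continuous_on UNIV (\<Phi> :: real \<Rightarrow> cmat)" and "\<Phi> 0 = g"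
    and near: "\<And>t. t \<noteq> 0 \<Longrightarrow> \<Phi> t \<in> double_coset_closure n w"
  shows "g \<in> double_coset_closure n w"
proof -
  have "isCont \<Phi> 0" using cont by (simp add: continuous_on_eq_continuous_at)
  then have "(\<Phi> \<longlongrightarrow> g) (at 0)" using \<open>\<Phi> 0 = g\<close> by (simp add: isCont_def)
  moreover have "\<forall>\<^sub>F t in at 0. \<Phi> t \<in> closure (double_coset n w)"
    using near by (auto simp: eventually_at_filter double_coset_closure_def)
  ultimately have "g \<in> closure (double_coset n w)" by (intro Lim_in_closed_set) auto
  then show ?thesis using g by (simp add: double_coset_closure_def)
qed

lemma double_coset_closure_perturb:
  assumes g: "g \<in> GL n"
    and near: "\<And>t::real. t \<noteq> 0 \<Longrightarrow>
      mat_mult n g (id_plus_outer n v (\<lambda>b. complex_of_real t * x b)) \<in> double_coset_closure n w"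
  shows "g \<in> double_coset_closure n w"
  by (rule double_coset_closure_limit[OF g continuous_on_id_plus_outer_path _ near])
    (simp add: id_plus_outer_eq_idm mat_mult_idm_right GL_D g)

definition Schubert_cell :: "nat \<Rightarrow> cmat \<Rightarrow> cmat set set" where
  "Schubert_cell n w = {flag_of n (mat_mult n b w) | b. b \<in> Borel n}"

lemma flag_of_in_Schubert_cell_iff:
  assumes w: "w \<in> GL n" and h: "h \<in> GL n"
  shows "flag_of n h \<in> Schubert_cell n w \<longleftrightarrow> h \<in> double_coset n w"
proof
  assume "flag_of n h \<in> Schubert_cell n w"
  then obtain b where b: "b \<in> Borel n" "flag_of n h = flag_of n (mat_mult n b w)"
    by (auto simp: Schubert_cell_def)
  then have "h \<in> flag_of n (mat_mult n b w)" using mem_flag_of[OF h] by simp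
  then show "h \<in> double_coset n w" using b(1) by (auto simp: flag_of_def double_coset_def)
next
  assume "h \<in> double_coset n w"
  then obtain b b' where b: "b \<in> Borel n" "b' \<in> Borel n" "h = mat_mult n (mat_mult n b w) b'"
    by (auto simp: double_coset_def)
  have "mat_mult n b w \<in> GL n" using Borel_D(1)[OF b(1)] w by (rule GL_mat_mult)
  then have "flag_of n h = flag_of n (mat_mult n b w)" using flag_of_mult_Borel b by simp
  then show "flag_of n h \<in> Schubert_cell n w" using b(1) by (auto simp: Schubert_cell_def)
qed

lemma double_coset_closure_if_flag_of_in_Schubert:
  assumes w: "w \<in> GL n" and g: "g \<in> GL n" and "flag_of n g \<in> Schubert n w"
  shows "g \<in> double_coset_closure n w"
proof -
  have cl: "\<And>T. flag_of n g \<in> T \<Longrightarrow> openin (flag_top n) T \<Longrightarrow> \<exists>y. y \<in> Schubert_cell n w \<and> y \<in> T"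
    using assms(3) unfolding Schubert_def in_closure_of Schubert_cell_def[symmetric] by blast
  have "g \<in> closure (double_coset n w)" unfolding closure_iff_nhds_not_empty
  proof (intro allI impI)
    fix A S assume S: "S \<subseteq> A" "open S" "g \<in> S"
    then have op: "openin (flag_top n) (flag_of n ` (GL n \<inter> S))"
      by (intro openin_flag_of_image openin_open_Int)
    have mem: "flag_of n g \<in> flag_of n ` (GL n \<inter> S)" using g S by blast
    obtain y where "y \<in> Schubert_cell n w" "y \<in> flag_of n ` (GL n \<inter> S)" using cl[OF mem op] by blast
    then obtain h where "h \<in> GL n \<inter> S" "flag_of n h \<in> Schubert_cell n w" by (elim imageE) simp
    then have "h \<in> double_coset n w \<inter> A" using flag_of_in_Schubert_cell_iff[OF w] S(1) by auto
    then show "double_coset n w \<inter> A \<noteq> {}" by blast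
  qed
  then show ?thesis using g by (simp add: double_coset_closure_def)
qed

lemma flag_of_in_Schubert_if_double_coset_closure:
  assumes w: "w \<in> GL n" and "g \<in> double_coset_closure n w"
  shows "flag_of n g \<in> Schubert n w"
proof -
  have g: "g \<in> GL n" and cl: "g \<in> closure (double_coset n w)"
    using assms(2) by (auto simp: double_coset_closure_def)
  have "\<exists>y. y \<in> Schubert_cell n w \<and> y \<in> T" if T: "flag_of n g \<in> T" "openin (flag_top n) T" for T
  proof -
    obtain U where U: "open U" "\<Union>T = GL n \<inter> U" and TF: "T \<subseteq> FlagVar n"
      using T(2) by (auto simp: openin_flag_top openin_open)
    have "g \<in> U" using T(1) mem_flag_of[OF g] U(2) by blast
    then have "double_coset n w \<inter> U \<noteq> {}"
      using cl U(1) unfolding closure_iff_nhds_not_empty by blast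
    then obtain h where h: "h \<in> double_coset n w" "h \<in> U" by blast
    then have hG: "h \<in> GL n" using double_coset_subset_GL[OF w] by blast
    with h(2) U(2) have "h \<in> \<Union>T" by simp
    then obtain y where y: "y \<in> T" "h \<in> y" by (elim UnionE)
    then obtain g' where "g' \<in> GL n" "y = flag_of n g'" using TF by (auto simp: FlagVar_def)
    then have "flag_of n h = y" using y flag_of_eq_if_mem by simp
    moreover have "flag_of n h \<in> Schubert_cell n w" using flag_of_in_Schubert_cell_iff[OF w hG] h(1) by simp
    ultimately show ?thesis using y(1) by blast
  qed
  moreover have "flag_of n g \<in> topspace (flag_top n)" using g by (simp add: topspace_flag_top FlagVar_def)
  ultimately show ?thesis unfolding Schubert_def in_closure_of Schubert_cell_def[symmetric] by blast
qed

lemma Schubert_eq_image: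
  assumes w: "w \<in> GL n"
  shows "Schubert n w = flag_of n ` double_coset_closure n w"
proof
  show "Schubert n w \<subseteq> flag_of n ` double_coset_closure n w"
  proof
    fix x assume x: "x \<in> Schubert n w"
    then have "x \<in> FlagVar n"
      using closure_of_subset_topspace[of "flag_top n"] unfolding Schubert_def topspace_flag_top by blast
    then obtain g where "g \<in> GL n" "x = flag_of n g" by (auto simp: FlagVar_def)
    then show "x \<in> flag_of n ` double_coset_closure n w"
      using double_coset_closure_if_flag_of_in_Schubert[OF w] x by blast
  qed
  show "flag_of n ` double_coset_closure n w \<subseteq> Schubert n w"
    using flag_of_in_Schubert_if_double_coset_closure[OF w] by blast
qed

lemma conjugate_E1n_apply:
  assumes "a \<in> {1..n}" "b \<in> {1..n}"
  shows "mat_mult n (minv n g) (mat_mult n (Eunit 1 n) g) a b = minv n g a 1 * g n b"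
proof -
  have "mat_mult n (Eunit 1 n) g m b = (if m = 1 then g n b else 0)" if "m \<in> {1..n}" for m
    using that assms by (simp add: mat_mult_apply sum_eq_single[of _ n] Eunit_def)
  then show ?thesis
    using assms by (simp add: mat_mult_apply sum_eq_single[of _ 1])
qed

text \<open>For the flag \<open>V\<close> of \<open>g\<close>, \<open>XH_cond n i j g\<close> says \<open>e\<^sub>1 \<in> V\<^sub>i\<close> and
  \<open>V\<^sub>j\<^sub>-\<^sub>1 \<subseteq> \<langle>e\<^sub>1, \<dots>, e\<^sub>n\<^sub>-\<^sub>1\<rangle>\<close>.\<close>

definition XH_cond :: "nat \<Rightarrow> nat \<Rightarrow> nat \<Rightarrow> cmat \<Rightarrow> bool" where
  "XH_cond n i j g \<longleftrightarrow> (\<forall>a\<in>{i<..n}. minv n g a 1 = 0) \<and> (\<forall>l\<in>{1..<j}. g n l = 0)"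

lemma minv_col1_nonzero:
  assumes "g \<in> GL n" "1 \<le> n"
  shows "\<exists>a\<in>{1..n}. minv n g a 1 \<noteq> 0"
proof (rule ccontr)
  assume "\<not> ?thesis"
  then have "mat_mult n g (minv n g) 1 1 = 0" using assms(2) by (simp add: mat_mult_apply)
  then show False using GL_D(3)[OF assms(1)] assms(2) by (simp add: idm_def)
qed

lemma last_row_nonzero:
  assumes "g \<in> GL n" "1 \<le> n"
  shows "\<exists>b\<in>{1..n}. g n b \<noteq> 0"
proof (rule ccontr)
  assume "\<not> ?thesis"
  then have "mat_mult n g (minv n g) n n = 0" using assms(2) by (simp add: mat_mult_apply)
  then show False using GL_D(3)[OF assms(1)] assms(2) by (simp add: idm_def)
qed

lemma conjugate_E1n_in_Hsp_iff:
  assumes g: "g \<in> GL n" and "1 \<le> n" "j \<le> n"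
  shows "mat_mult n (minv n g) (mat_mult n (Eunit 1 n) g) \<in> Hsp n i j \<longleftrightarrow> XH_cond n i j g"
proof -
  let ?X = "mat_mult n (minv n g) (mat_mult n (Eunit 1 n) g)"
  obtain a0 b0 where a0: "a0 \<in> {1..n}" "minv n g a0 1 \<noteq> 0" and b0: "b0 \<in> {1..n}" "g n b0 \<noteq> 0"
    using minv_col1_nonzero[OF g] last_row_nonzero[OF g] assms(2) by blast
  have entry: "?X k l = (if k \<in> {1..n} \<and> l \<in> {1..n} then minv n g k 1 * g n l else 0)" for k l
    by (simp add: conjugate_E1n_apply mat_mult_outside)
  have "?X \<in> Hsp n i j \<longleftrightarrow> (\<forall>k l. ?X k l \<noteq> 0 \<longrightarrow> k \<le> i \<and> j \<le> l)"
    by (simp add: Hsp_def)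
  also have "\<dots> \<longleftrightarrow> (\<forall>a\<in>{1..n}. \<forall>b\<in>{1..n}. minv n g a 1 * g n b \<noteq> 0 \<longrightarrow> a \<le> i \<and> j \<le> b)"
    unfolding entry by auto
  also have "\<dots> \<longleftrightarrow> XH_cond n i j g"
  proof
    assume H: "\<forall>a\<in>{1..n}. \<forall>b\<in>{1..n}. minv n g a 1 * g n b \<noteq> 0 \<longrightarrow> a \<le> i \<and> j \<le> b"
    show "XH_cond n i j g" unfolding XH_cond_def
    proof (intro conjI ballI)
      fix a assume "a \<in> {i<..n}"
      then show "minv n g a 1 = 0" using H b0 by fastforce
    next
      fix l assume "l \<in> {1..<j}"
      then show "g n l = 0" using H a0 assms(3) by fastforce
    qed
  next
    assume C: "XH_cond n i j g"
    show "\<forall>a\<in>{1..n}. \<forall>b\<in>{1..n}. minv n g a 1 * g n b \<noteq> 0 \<longrightarrow> a \<le> i \<and> j \<le> b"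
    proof (intro ballI impI)
      fix a b assume "a \<in> {1..n}" "b \<in> {1..n}" "minv n g a 1 * g n b \<noteq> 0"
      then have "\<not> i < a" "\<not> b < j" using C by (auto simp: XH_cond_def)
      then show "a \<le> i \<and> j \<le> b" by simp
    qed
  qed
  finally show ?thesis .
qed

lemma XH_cond_mult_Borel:
  assumes g: "g \<in> GL n" and b: "b \<in> Borel n" and C: "XH_cond n i j g"
  shows "XH_cond n i j (mat_mult n g b)"
  unfolding XH_cond_def
proof (intro conjI ballI)
  fix a assume a: "a \<in> {i<..n}"
  have "minv n b a m * minv n g m 1 = 0" if "m \<in> {1..n}" for m
    using Borel_D(2)[OF Borel_minv[OF b], of m a] C a that by (cases "m < a") (auto simp: XH_cond_def)
  then have "(\<Sum>m=1..n. minv n b a m * minv n g m 1) = 0" by (blast intro: sum.neutral)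
  then have "mat_mult n (minv n b) (minv n g) a 1 = 0" by (simp add: mat_mult_def)
  then show "minv n (mat_mult n g b) a 1 = 0" using minv_mat_mult[OF g Borel_D(1)[OF b]] by simp
next
  fix l assume l: "l \<in> {1..<j}"
  have "g n m * b m l = 0" if "m \<in> {1..n}" for m
    using Borel_D(2)[OF b, of l m] C l that by (cases "l < m") (auto simp: XH_cond_def)
  then have "(\<Sum>m=1..n. g n m * b m l) = 0" by (blast intro: sum.neutral)
  then show "mat_mult n g b n l = 0" by (simp add: mat_mult_def)
qed

lemma closedin_XH_cond: "closedin (top_of_set (GL n)) {g \<in> GL n. XH_cond n i j g}"
proof -
  have "{g \<in> GL n. XH_cond n i j g} = \<Inter>(insert (GL n)
      ((\<lambda>a. {g \<in> GL n. minv n g a 1 = 0}) ` {i<..n} \<union> (\<lambda>l. GL n \<inter> {g. g n l = 0}) ` {1..<j}))"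
    by (auto simp: XH_cond_def)
  moreover have "closedin (top_of_set (GL n)) {g \<in> GL n. minv n g a 1 = 0}" if "a \<in> {i<..n}" for a
    using that by (intro closedin_minv_entry_eq_0) auto
  moreover have "closedin (top_of_set (GL n)) (GL n \<inter> {g. g n l = 0})" for l
    by (intro closedin_closed_Int closed_Collect_eq continuous_on_entry continuous_on_const)
  ultimately show ?thesis by (simp only:) (rule closedin_Inter, auto)
qed

lemma minv_col1_eq_0_if_col_e1:
  assumes g: "g \<in> GL n" and i: "i \<in> {1..n}" and col: "\<And>a. a \<in> {1..n} \<Longrightarrow> a \<noteq> 1 \<Longrightarrow> g a i = 0"
    and a: "a \<in> {1..n}" "a \<noteq> i"
  shows "minv n g a 1 = 0"
proof -
  have key: "minv n g c 1 * g 1 i = idm n c i" if c: "c \<in> {1..n}" for c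
  proof -
    have "idm n c i = mat_mult n (minv n g) g c i" using GL_D[OF g] by simp
    also have "\<dots> = minv n g c 1 * g 1 i"
      unfolding mat_mult_apply[OF c i] by (rule sum_eq_single) (use c i col in auto)
    finally show ?thesis by simp
  qed
  have "g 1 i \<noteq> 0" using key[OF i] i by (auto simp: idm_def)
  then show ?thesis using key[OF a(1)] a by (simp add: idm_def)
qed

locale Hij_Schubert =
  fixes n i j :: nat
  assumes n_ge_2: "n \<ge> 2" and i_range: "i \<in> {1..n}" and j_range: "j \<in> {1..n}" and i_ne_j: "i \<noteq> j"
begin

abbreviation "\<sigma> \<equiv> w_sigma n i j"
abbreviation "w \<equiv> w_ij n i j"

lemma one_in_range: "1 \<in> {1..n}" and n_in_range: "n \<in> {1..n}"
  using n_ge_2 by auto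

lemma w_sigma_i [simp]: "\<sigma> i = 1"
  using i_ne_j by (simp add: w_sigma_def)

lemma w_sigma_j [simp]: "\<sigma> j = n"
  by (simp add: w_sigma_def)

lemma w_sigma_rest:
  "c \<in> {1..n} - {i, j} \<Longrightarrow> \<sigma> c = n - card {c' \<in> {1..c}. c' \<noteq> i \<and> c' \<noteq> j}"
  by (simp add: w_sigma_def)

lemma w_sigma_rest_bounds:
  assumes c: "c \<in> {1..n} - {i, j}"
  shows "1 < \<sigma> c \<and> \<sigma> c < n"
proof -
  let ?R = "{c' \<in> {1..c}. c' \<noteq> i \<and> c' \<noteq> j}"
  have "card {c} \<le> card ?R" using c by (intro card_mono) auto
  moreover have "card ?R \<le> card ({1..n} - {i, j})" using c by (intro card_mono) auto
  moreover have "card ({1..n} - {i, j}) = card {1..n} - card {i, j}"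
    using i_range j_range by (intro card_Diff_subset) auto
  ultimately have "1 \<le> card ?R" "card ?R \<le> n - 2" using i_ne_j by auto
  then show ?thesis using w_sigma_rest[OF c] n_ge_2 by linarith
qed

lemma w_sigma_rest_decreasing:
  assumes c: "c \<in> {1..n} - {i, j}" and c': "c' \<in> {1..n} - {i, j}" and "c < c'"
  shows "\<sigma> c' < \<sigma> c"
proof -
  let ?R = "\<lambda>c. {x \<in> {1..c}. x \<noteq> i \<and> x \<noteq> j}"
  have "?R c \<subseteq> ?R c'" "c' \<in> ?R c'" "c' \<notin> ?R c" using assms by auto
  then have "?R c \<subset> ?R c'" by blast
  then have "card (?R c) < card (?R c')" by (rule psubset_card_mono[rotated]) simp
  moreover have "1 < \<sigma> c'" using w_sigma_rest_bounds[OF c'] by simp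
  ultimately show ?thesis using w_sigma_rest[OF c] w_sigma_rest[OF c'] by linarith
qed

lemma w_sigma_range: "c \<in> {1..n} \<Longrightarrow> \<sigma> c \<in> {1..n}"
  using w_sigma_rest_bounds[of c] n_ge_2 by (cases "c = i \<or> c = j") auto

lemma w_sigma_eq_n_iff: "c \<in> {1..n} \<Longrightarrow> \<sigma> c = n \<longleftrightarrow> c = j"
  using w_sigma_rest_bounds[of c] n_ge_2 i_ne_j by (cases "c = i \<or> c = j") auto

lemma w_sigma_eq_1_iff: "c \<in> {1..n} \<Longrightarrow> \<sigma> c = 1 \<longleftrightarrow> c = i"
  using w_sigma_rest_bounds[of c] n_ge_2 i_ne_j by (cases "c = i \<or> c = j") auto

lemma inj_on_w_sigma: "inj_on \<sigma> {1..n}"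
proof (rule inj_onI)
  fix c c' assume c: "c \<in> {1..n}" "c' \<in> {1..n}" "\<sigma> c = \<sigma> c'"
  show "c = c'"
  proof (cases "c \<in> {i, j} \<or> c' \<in> {i, j}")
    case True
    then show ?thesis using c w_sigma_eq_n_iff[OF c(1)] w_sigma_eq_n_iff[OF c(2)]
        w_sigma_eq_1_iff[OF c(1)] w_sigma_eq_1_iff[OF c(2)] by auto
  next
    case False
    then show ?thesis using c w_sigma_rest_decreasing[of c c'] w_sigma_rest_decreasing[of c' c]
      by (cases c c' rule: linorder_cases) auto
  qed
qed

lemma w_sigma_image: "\<sigma> ` {1..n} = {1..n}"
  using w_sigma_range by (intro endo_inj_surj inj_on_w_sigma) auto

lemma w_sigma_surj: "a \<in> {1..n} \<Longrightarrow> \<exists>c\<in>{1..n}. a = \<sigma> c"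
  using w_sigma_image by (metis imageE)

lemma card_w_sigma_image: "k \<le> n \<Longrightarrow> card (\<sigma> ` {1..k}) = k"
  using inj_on_subset[OF inj_on_w_sigma, of "{1..k}"] by (simp add: card_image)

lemma w_apply: "w a l = (if l \<in> {1..n} \<and> a = \<sigma> l then 1 else 0)"
  by (simp add: w_ij_def perm_mat_def)

lemma mat_mult_w_apply:
  assumes "a \<in> {1..n}" "l \<in> {1..n}"
  shows "mat_mult n g w a l = g a (\<sigma> l)"
proof -
  have "mat_mult n g w a l = g a (\<sigma> l) * w (\<sigma> l) l"
    unfolding mat_mult_apply[OF assms]
    by (rule sum_eq_single) (use w_sigma_range[OF assms(2)] in \<open>auto simp: w_apply\<close>)
  then show ?thesis using assms by (simp add: w_apply)
qed

lemma w_sigma_eq_iff: "c \<in> {1..n} \<Longrightarrow> c' \<in> {1..n} \<Longrightarrow> \<sigma> c = \<sigma> c' \<longleftrightarrow> c = c'"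
  using inj_onD[OF inj_on_w_sigma] by blast

lemma mat_mult_w_transpose_apply:
  assumes "a \<in> {1..n}" "c \<in> {1..n}"
  shows "mat_mult n g (\<lambda>a l. w l a) a (\<sigma> c) = g a c"
proof -
  have "mat_mult n g (\<lambda>a l. w l a) a (\<sigma> c) = g a c * w (\<sigma> c) c"
    unfolding mat_mult_apply[OF assms(1) w_sigma_range[OF assms(2)]]
    by (rule sum_eq_single) (use assms w_sigma_eq_iff in \<open>auto simp: w_apply\<close>)
  then show ?thesis using assms by (simp add: w_apply)
qed

lemma w_GL: "w \<in> GL n" and minv_w: "minv n w = (\<lambda>a l. w l a)"
proof -
  have mat: "is_mat n w" "is_mat n (\<lambda>a l. w l a)"
    using w_sigma_range by (auto simp: is_mat_def w_apply split: if_splits)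
  have right: "mat_mult n w (\<lambda>a l. w l a) = idm n"
  proof (intro ext)
    fix a b
    show "mat_mult n w (\<lambda>a l. w l a) a b = idm n a b"
    proof (cases "a \<in> {1..n} \<and> b \<in> {1..n}")
      case True
      then obtain c where "c \<in> {1..n}" "b = \<sigma> c" using w_sigma_surj by blast
      then show ?thesis using True mat_mult_w_transpose_apply by (auto simp: w_apply idm_def)
    qed (auto simp: mat_mult_outside idm_def)
  qed
  have left: "mat_mult n (\<lambda>a l. w l a) w = idm n"
  proof (intro ext)
    fix a b
    show "mat_mult n (\<lambda>a l. w l a) w a b = idm n a b"
      by (cases "a \<in> {1..n} \<and> b \<in> {1..n}")
        (auto simp: mat_mult_w_apply mat_mult_outside w_apply idm_def w_sigma_eq_iff)
  qed
  show "w \<in> GL n" using mat right left by (intro GL_I)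
  then show "minv n w = (\<lambda>a l. w l a)" using mat right by (intro minv_eqI)
qed

subsection \<open>The Schubert variety lies in \<open>X_H\<close>\<close>

lemma XH_Hsp_eq_image: "XH n (Hsp n i j) = flag_of n ` {g \<in> GL n. XH_cond n i j g}"
proof -
  have "{g. g \<in> GL n \<and> mat_mult n (minv n g) (mat_mult n (Eunit 1 n) g) \<in> Hsp n i j} =
      {g \<in> GL n. XH_cond n i j g}"
    using conjugate_E1n_in_Hsp_iff[of _ n j i] n_ge_2 j_range by auto
  then show ?thesis unfolding XH_def setcompr_eq_image by simp
qed

lemma XH_cond_Borel_w:
  assumes b: "b \<in> Borel n"
  shows "XH_cond n i j (mat_mult n b w)"
  unfolding XH_cond_def
proof (intro conjI ballI)
  have bw: "mat_mult n b w \<in> GL n" using Borel_D(1)[OF b] w_GL by (rule GL_mat_mult)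
  have "mat_mult n b w a i = 0" if "a \<in> {1..n}" "a \<noteq> 1" for a
    using mat_mult_w_apply[OF that(1) i_range] Borel_D(2)[OF b] that by simp
  then show "minv n (mat_mult n b w) a 1 = 0" if "a \<in> {i<..n}" for a
    using minv_col1_eq_0_if_col_e1[OF bw i_range] that i_range by auto
next
  fix l assume l: "l \<in> {1..<j}"
  then have "\<sigma> l < n" using w_sigma_range[of l] w_sigma_eq_n_iff[of l] j_range by fastforce
  then show "mat_mult n b w n l = 0"
    using mat_mult_w_apply[OF n_in_range] l j_range Borel_D(2)[OF b] by simp
qed

lemma double_coset_closure_XH_cond:
  assumes "g \<in> double_coset_closure n w"
  shows "XH_cond n i j g"
proof -
  have "\<exists>F. closed F \<and> {g \<in> GL n. XH_cond n i j g} = GL n \<inter> F"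
    using closedin_XH_cond unfolding closedin_closed .
  then obtain F where F: "closed F" "{g \<in> GL n. XH_cond n i j g} = GL n \<inter> F"
    by (elim exE conjE)
  have "double_coset n w \<subseteq> F"
  proof
    fix h assume "h \<in> double_coset n w"
    then obtain b b' where b: "b \<in> Borel n" "b' \<in> Borel n" "h = mat_mult n (mat_mult n b w) b'"
      by (auto simp: double_coset_def)
    have bw: "mat_mult n b w \<in> GL n" using Borel_D(1)[OF b(1)] w_GL by (rule GL_mat_mult)
    have "XH_cond n i j h" using XH_cond_mult_Borel[OF bw b(2) XH_cond_Borel_w[OF b(1)]] b(3) by simp
    moreover have "h \<in> GL n" using GL_mat_mult[OF bw Borel_D(1)[OF b(2)]] b(3) by simp
    ultimately have "h \<in> {g \<in> GL n. XH_cond n i j g}" by simp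
    then show "h \<in> F" using F(2) by blast
  qed
  then have "closure (double_coset n w) \<subseteq> F" using F(1) by (rule closure_minimal)
  then show ?thesis using assms F(2) by (auto simp: double_coset_closure_def)
qed

subsection \<open>Matrices in normal form lie in the closure of \<open>BwB\<close>\<close>

definition normal_form :: "cmat \<Rightarrow> bool" where
  "normal_form g \<longleftrightarrow> g \<in> GL n \<and> (\<forall>a\<in>{1..n}. g a i = basis_vec 1 a \<and> g a j = basis_vec n a)
     \<and> (\<forall>b\<in>{1..n}. g n b = basis_vec j b)"

definition has_w_pivot :: "cmat \<Rightarrow> nat \<Rightarrow> bool" where
  "has_w_pivot g c \<longleftrightarrow> g (\<sigma> c) c \<noteq> 0 \<and> (\<forall>a\<in>{\<sigma> c<..n}. g a c = 0)"

definition row_cleared :: "cmat \<Rightarrow> nat \<Rightarrow> bool" where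
  "row_cleared g c \<longleftrightarrow> (\<forall>c'\<in>{c<..n}. g (\<sigma> c) c' = 0)"

definition reduced_before :: "nat \<Rightarrow> cmat \<Rightarrow> bool" where
  "reduced_before k g \<longleftrightarrow> normal_form g \<and> (\<forall>c\<in>{1..<k}. has_w_pivot g c \<and> row_cleared g c)"

lemma reduced_before_all_in_double_coset:
  assumes "reduced_before (Suc n) g"
  shows "g \<in> double_coset n w"
proof -
  have gG: "g \<in> GL n" and piv: "\<And>c. c \<in> {1..n} \<Longrightarrow> has_w_pivot g c"
    using assms by (auto simp: reduced_before_def normal_form_def)
  define b where "b = mat_mult n g (\<lambda>a l. w l a)"
  have "b \<in> Borel n"
  proof (rule Borel_I)
    have "(\<lambda>a l. w l a) \<in> GL n" using GL_minv[OF w_GL] unfolding minv_w .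
    then show "b \<in> GL n" unfolding b_def using gG by (intro GL_mat_mult)
    fix k l :: nat assume "l < k"
    show "b k l = 0"
    proof (cases "k \<in> {1..n} \<and> l \<in> {1..n}")
      case True
      then obtain c where c: "c \<in> {1..n}" "l = \<sigma> c" using w_sigma_surj by blast
      then have "b k l = g k c" using mat_mult_w_transpose_apply True by (simp add: b_def)
      also have "\<dots> = 0" using piv[OF c(1)] \<open>l < k\<close> c True by (simp add: has_w_pivot_def)
      finally show ?thesis .
    qed (simp add: b_def mat_mult_outside)
  qed
  moreover have "mat_mult n b w = mat_mult n g (mat_mult n (minv n w) w)"
    unfolding b_def minv_w by (rule mat_mult_assoc)
  then have "g = mat_mult n (mat_mult n b w) (idm n)"
    using GL_D(4)[OF w_GL] GL_D(1)[OF gG] by (simp add: mat_mult_idm_right)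
  ultimately show ?thesis unfolding double_coset_def using idm_Borel by blast
qed

lemma reduced_before_below_pivot:
  assumes I: "reduced_before k g" and k: "k \<in> {1..n}" and a: "a \<in> {\<sigma> k<..n}"
  shows "g a k = 0"
proof -
  have N: "normal_form g" using I by (simp add: reduced_before_def)
  have aI: "a \<in> {1..n}" using a w_sigma_range[OF k] by auto
  consider "k = i" | "k = j" | "k \<in> {1..n} - {i, j}" using k by blast
  then show ?thesis
  proof cases
    case 1 then show ?thesis using N aI a by (simp add: normal_form_def basis_vec_def)
  next
    case 2 then show ?thesis using a by simp
  next
    case rest: 3
    obtain c where c: "c \<in> {1..n}" "a = \<sigma> c" using w_sigma_surj[OF aI] by blast
    consider "a = n" | "c < k" | "k < c" "a \<noteq> n" using c a by (cases c k rule: linorder_cases) auto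
    then show ?thesis
    proof cases
      case 1 then show ?thesis using N k rest by (simp add: normal_form_def basis_vec_def)
    next
      case 2
      then have "row_cleared g c" using I c by (simp add: reduced_before_def)
      then show ?thesis using 2 k c by (simp add: row_cleared_def)
    next
      case 3
      then have "c \<in> {1..n} - {i, j}"
        using c a w_sigma_eq_n_iff w_sigma_eq_1_iff w_sigma_rest_bounds[OF rest] by auto
      then have "\<sigma> c < \<sigma> k" using w_sigma_rest_decreasing[OF rest] 3 by simp
      then show ?thesis using a c by simp
    qed
  qed
qed

lemma reduced_before_column_op:
  assumes I: "reduced_before k g" and m: "m \<in> {k..n}" "1 \<le> m"
    and x: "\<And>b. b \<notin> {1..n} \<Longrightarrow> x b = 0" "\<And>b. b < k \<Longrightarrow> x b = 0" "x m = 0" "x i = 0" "x j = 0"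
    and row_n: "\<And>b. g n m * x b = 0"
  shows "reduced_before k (mat_mult n g (id_plus_outer n (basis_vec m) x))"
proof -
  let ?g = "mat_mult n g (id_plus_outer n (basis_vec m) x)"
  have N: "normal_form g" using I by (simp add: reduced_before_def)
  have mI: "m \<in> {1..n}" using m by auto
  have entry: "?g a b = g a b + g a m * x b" for a b
    using N mI x(1) by (intro mat_mult_column_op_apply) (auto simp: normal_form_def GL_D)
  have "?g \<in> GL n" using N mI x(3) by (intro column_op_GL) (auto simp: normal_form_def)
  then have "normal_form ?g" using N x(4,5) row_n by (auto simp: normal_form_def entry)
  moreover have "has_w_pivot ?g c \<and> row_cleared ?g c" if c: "c \<in> {1..<k}" for c
  proof -
    have "has_w_pivot g c" "row_cleared g c" using I c by (auto simp: reduced_before_def)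
    moreover have "g (\<sigma> c) m = 0" using \<open>row_cleared g c\<close> c m by (simp add: row_cleared_def)
    ultimately show ?thesis using x(2) c by (auto simp: has_w_pivot_def row_cleared_def entry)
  qed
  ultimately show ?thesis by (simp add: reduced_before_def)
qed

lemma clearing_vector_fixes_normal_form:
  assumes k: "k \<in> {1..n}" and N: "normal_form g"
  defines "x \<equiv> \<lambda>b. if b \<in> {k<..n} then - g (\<sigma> k) b / g (\<sigma> k) k else 0"
  shows "x i = 0" "x j = 0" "g n k * x b = 0"
proof -
  have row: "g (\<sigma> k) i = basis_vec 1 (\<sigma> k)" "g (\<sigma> k) j = basis_vec n (\<sigma> k)"
    using N w_sigma_range[OF k] by (simp_all add: normal_form_def)
  show "x i = 0"
  proof (cases "k = i")
    case False
    then have "g (\<sigma> k) i = 0" using row(1) w_sigma_eq_1_iff[OF k] by (simp add: basis_vec_def)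
    then show ?thesis by (simp add: x_def)
  qed (simp add: x_def)
  show "x j = 0"
  proof (cases "k = j")
    case False
    then have "g (\<sigma> k) j = 0" using row(2) w_sigma_eq_n_iff[OF k] by (simp add: basis_vec_def)
    then show ?thesis by (simp add: x_def)
  qed (simp add: x_def)
  show "g n k * x b = 0"
  proof (cases "k = j")
    case True
    have "g n b = 0" if "b \<in> {k<..n}" using N that True by (simp add: normal_form_def basis_vec_def)
    then show ?thesis using True by (simp add: x_def)
  next
    case False then show ?thesis using N k by (simp add: normal_form_def basis_vec_def)
  qed
qed

lemma reduced_before_Suc_by_column_ops:
  assumes k: "k \<in> {1..n}" and I: "reduced_before k g" and nz: "g (\<sigma> k) k \<noteq> 0"
  shows "\<exists>P\<in>Borel n. reduced_before (Suc k) (mat_mult n g P)"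
proof -
  have N: "normal_form g" using I by (simp add: reduced_before_def)
  define x where "x = (\<lambda>b. if b \<in> {k<..n} then - g (\<sigma> k) b / g (\<sigma> k) k else 0)"
  note x_fixes = clearing_vector_fixes_normal_form[OF k N, folded x_def]
  define P where "P = id_plus_outer n (basis_vec k) x"
  have "dot n x (basis_vec k) = 0" using k by (simp add: dot_basis_vec_right x_def)
  then have PB: "P \<in> Borel n" unfolding P_def
    by (intro id_plus_outer_Borel) (auto simp: x_def basis_vec_def)
  let ?g = "mat_mult n g P"
  have entry: "?g a b = g a b + g a k * x b" for a b
    unfolding P_def using N k by (intro mat_mult_column_op_apply) (auto simp: normal_form_def GL_D x_def)
  have "reduced_before k ?g"
    unfolding P_def using k x_fixes by (intro reduced_before_column_op[OF I]) (auto simp: x_def)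
  moreover have "has_w_pivot ?g k"
  proof -
    have "x k = 0" by (simp add: x_def)
    then show ?thesis using nz reduced_before_below_pivot[OF I k] by (simp add: has_w_pivot_def entry)
  qed
  moreover have "row_cleared ?g k" using nz by (simp add: row_cleared_def entry x_def)
  moreover have "{1..<Suc k} = insert k {1..<k}" using k by auto
  ultimately have "reduced_before (Suc k) ?g" by (simp add: reduced_before_def)
  then show ?thesis using PB by blast
qed

lemma reduced_before_exists_right_of_pivot:
  assumes k: "k \<in> {1..n}" and I: "reduced_before k g" and z: "g (\<sigma> k) k = 0"
  shows "\<exists>m\<in>{k<..n}. g (\<sigma> k) m \<noteq> 0"
proof (rule ccontr)
  assume H: "\<not> ?thesis"
  have "g \<in> GL n" using I by (simp add: reduced_before_def normal_form_def)
  moreover have "\<sigma> ` {1..k} \<subseteq> {1..n}" using k by (intro image_subsetI w_sigma_range) simp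
  moreover have "{k..n} \<subseteq> {1..n}" using k by simp
  moreover have "n < card (\<sigma> ` {1..k}) + card {k..n}" using card_w_sigma_image[of k] k by simp
  ultimately have "\<exists>a\<in>\<sigma> ` {1..k}. \<exists>b\<in>{k..n}. g a b \<noteq> 0" by (rule GL_nonzero_in_block)
  then obtain c b where c: "c \<in> {1..k}" and b: "b \<in> {k..n}" and nz: "g (\<sigma> c) b \<noteq> 0" by blast
  show False
  proof (cases "c < k")
    case True
    then have "row_cleared g c" using I c unfolding reduced_before_def by simp
    then show False using True b nz by (simp add: row_cleared_def)
  next
    case False
    then have "c = k" using c by simp
    show False
    proof (cases "b = k")
      case True then show False using z nz \<open>c = k\<close> by simp
    next
      case False then have "b \<in> {k<..n}" using b by simp
      then show False using H nz \<open>c = k\<close> by blast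
    qed
  qed
qed

lemma reduced_before_perturb_zero_pivot:
  assumes k: "k \<in> {1..n}" and I: "reduced_before k g" and z: "g (\<sigma> k) k = 0"
  shows "\<exists>m. \<forall>t::real. t \<noteq> 0 \<longrightarrow>
    reduced_before k (mat_mult n g (id_plus_outer n (basis_vec m) (\<lambda>b. complex_of_real t * basis_vec k b))) \<and>
    mat_mult n g (id_plus_outer n (basis_vec m) (\<lambda>b. complex_of_real t * basis_vec k b)) (\<sigma> k) k \<noteq> 0"
proof -
  have N: "normal_form g" using I by (simp add: reduced_before_def)
  obtain m where m: "m \<in> {k<..n}" "g (\<sigma> k) m \<noteq> 0"
    using reduced_before_exists_right_of_pivot[OF k I z] by blast
  have ki: "k \<noteq> i" and kj: "k \<noteq> j"
    using N z k i_range j_range by (auto simp: normal_form_def basis_vec_def)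
  have "m \<noteq> j" using N m w_sigma_range[OF k] w_sigma_eq_n_iff[OF k] kj
    by (auto simp: normal_form_def basis_vec_def)
  then have gnm: "g n m = 0" using N m by (simp add: normal_form_def basis_vec_def)
  show ?thesis
  proof (intro exI allI impI conjI)
    fix t :: real assume t: "t \<noteq> 0"
    let ?h = "mat_mult n g (id_plus_outer n (basis_vec m) (\<lambda>b. complex_of_real t * basis_vec k b))"
    show "reduced_before k ?h"
      using m k ki kj gnm by (intro reduced_before_column_op[OF I]) (auto simp: basis_vec_def)
    have "?h (\<sigma> k) k = g (\<sigma> k) k + g (\<sigma> k) m * (complex_of_real t * basis_vec k k)"
      using m k N by (intro mat_mult_column_op_apply) (auto simp: normal_form_def GL_D basis_vec_def)
    then show "?h (\<sigma> k) k \<noteq> 0" using z m(2) t by (simp add: basis_vec_def)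
  qed
qed

lemma double_coset_closure_if_reduced_before:
  assumes "k \<le> Suc n" "1 \<le> k" "reduced_before k g"
  shows "g \<in> double_coset_closure n w"
  using assms
proof (induction k arbitrary: g rule: inc_induct)
  case base
  then show ?case using reduced_before_all_in_double_coset closure_subset
    by (auto simp: double_coset_closure_def reduced_before_def normal_form_def)
next
  case (step k)
  have k: "k \<in> {1..n}" using step.hyps(2) step.prems(1) by simp
  have GL: "h \<in> GL n" if "reduced_before k h" for h
    using that by (simp add: reduced_before_def normal_form_def)
  have nonzero_pivot: "h \<in> double_coset_closure n w" if h: "reduced_before k h" "h (\<sigma> k) k \<noteq> 0" for h
  proof -
    obtain P where "P \<in> Borel n" "reduced_before (Suc k) (mat_mult n h P)"
      using reduced_before_Suc_by_column_ops[OF k h] by blast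
    then show ?thesis using step.IH GL[OF h(1)] by (auto intro: double_coset_closure_cancel_right)
  qed
  show ?case
  proof (cases "g (\<sigma> k) k = 0")
    case False then show ?thesis using nonzero_pivot step.prems(2) by blast
  next
    case True
    then obtain m where "\<forall>t::real. t \<noteq> 0 \<longrightarrow>
        reduced_before k (mat_mult n g (id_plus_outer n (basis_vec m) (\<lambda>b. complex_of_real t * basis_vec k b))) \<and>
        mat_mult n g (id_plus_outer n (basis_vec m) (\<lambda>b. complex_of_real t * basis_vec k b)) (\<sigma> k) k \<noteq> 0"
      using reduced_before_perturb_zero_pivot[OF k step.prems(2)] by blast
    then show ?thesis
      using double_coset_closure_perturb[OF GL[OF step.prems(2)]] nonzero_pivot by blast
  qed
qed

lemma double_coset_closure_if_normal_form:
  "normal_form g \<Longrightarrow> g \<in> double_coset_closure n w"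
  using double_coset_closure_if_reduced_before[of 1 g] by (simp add: reduced_before_def)

subsection \<open>Reduction to the normal form\<close>

lemma double_coset_closure_if_col_i_e1_row_n_ej:
  assumes g: "g \<in> GL n" and col_i: "\<And>a. a \<in> {1..n} \<Longrightarrow> g a i = basis_vec 1 a"
    and row_n: "\<And>b. b \<in> {1..n} \<Longrightarrow> g n b = basis_vec j b"
  shows "g \<in> double_coset_closure n w"
proof -
  define v where "v = (\<lambda>a. if a \<in> {1..n} \<and> a \<noteq> n then - g a j else 0)"
  define L where "L = id_plus_outer n v (basis_vec n)"
  have "dot n (basis_vec n) v = 0" using n_in_range by (simp add: dot_basis_vec_left v_def)
  then have LB: "L \<in> Borel n" unfolding L_def
    by (intro id_plus_outer_Borel) (auto simp: basis_vec_def v_def)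
  have entry: "mat_mult n L g a b = g a b + v a * g n b" if "a \<in> {1..n}" "b \<in> {1..n}" for a b
    using that n_in_range by (simp add: L_def id_plus_outer_mat_mult_apply sum_basis_vec_mult)
  have "normal_form (mat_mult n L g)" unfolding normal_form_def
  proof (intro conjI ballI)
    show "mat_mult n L g \<in> GL n" using Borel_D(1)[OF LB] g by (rule GL_mat_mult)
    fix a assume a: "a \<in> {1..n}"
    show "mat_mult n L g a i = basis_vec 1 a"
      using entry[OF a i_range] row_n[OF i_range] col_i[OF a] i_ne_j by (simp add: basis_vec_def)
    show "mat_mult n L g a j = basis_vec n a"
      using entry[OF a j_range] row_n[OF j_range] a by (auto simp: v_def basis_vec_def)
  next
    fix b assume b: "b \<in> {1..n}"
    show "mat_mult n L g n b = basis_vec j b" using entry[OF n_in_range b] row_n[OF b] by (simp add: v_def)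
  qed
  then show ?thesis
    using double_coset_closure_if_normal_form LB g by (blast intro: double_coset_closure_cancel_left)
qed

lemma double_coset_closure_if_col_i_e1_entry_nj:
  assumes g: "g \<in> GL n" and C: "XH_cond n i j g"
    and col_i: "\<And>a. a \<in> {1..n} \<Longrightarrow> g a i = basis_vec 1 a" and nj: "g n j \<noteq> 0"
  shows "g \<in> double_coset_closure n w"
proof -
  define x where
    "x = (\<lambda>b. if b = j then 1 / g n j - 1 else if b \<in> {j<..n} then - g n b / g n j else 0)"
  define P where "P = id_plus_outer n (basis_vec j) x"
  have "1 + dot n x (basis_vec j) \<noteq> 0" using j_range nj by (simp add: dot_basis_vec_right x_def)
  then have PB: "P \<in> Borel n" unfolding P_def
    by (intro id_plus_outer_Borel) (auto simp: basis_vec_def x_def)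
  have entry: "mat_mult n g P a b = g a b + g a j * x b" for a b
    unfolding P_def using j_range GL_D(1)[OF g] by (intro mat_mult_column_op_apply) (auto simp: x_def)
  have "g n i = 0" using col_i[OF n_in_range] n_ge_2 by (simp add: basis_vec_def)
  then have xi: "x i = 0" using i_ne_j by (simp add: x_def)
  have "mat_mult n g P \<in> double_coset_closure n w"
  proof (rule double_coset_closure_if_col_i_e1_row_n_ej)
    show "mat_mult n g P \<in> GL n" using g Borel_D(1)[OF PB] by (rule GL_mat_mult)
    show "mat_mult n g P a i = basis_vec 1 a" if "a \<in> {1..n}" for a
      using that col_i xi by (simp add: entry)
    show "mat_mult n g P n b = basis_vec j b" if b: "b \<in> {1..n}" for b
    proof (cases "b < j")
      case True then show ?thesis using C b by (simp add: entry x_def basis_vec_def XH_cond_def)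
    next
      case False then show ?thesis using nj b by (auto simp: entry x_def basis_vec_def field_simps)
    qed
  qed
  then show ?thesis using PB g by (rule double_coset_closure_cancel_right)
qed

lemma double_coset_closure_if_col_i_e1:
  assumes g: "g \<in> GL n" and C: "XH_cond n i j g"
    and col_i: "\<And>a. a \<in> {1..n} \<Longrightarrow> g a i = basis_vec 1 a"
  shows "g \<in> double_coset_closure n w"
proof (cases "g n j = 0")
  case False then show ?thesis using double_coset_closure_if_col_i_e1_entry_nj[OF g C col_i] by simp
next
  case nj: True
  obtain m where m: "m \<in> {1..n}" "g n m \<noteq> 0" using last_row_nonzero[OF g] n_ge_2 by auto
  then have "\<not> m < j" "m \<noteq> j" using C nj by (auto simp: XH_cond_def)
  then have mj: "j < m" by simp
  show ?thesis
  proof (rule double_coset_closure_perturb[OF g, where v = "basis_vec m" and x = "basis_vec j"])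
    fix t :: real assume t: "t \<noteq> 0"
    let ?h = "mat_mult n g (id_plus_outer n (basis_vec m) (\<lambda>b. complex_of_real t * basis_vec j b))"
    have entry: "?h a b = g a b + g a m * (complex_of_real t * basis_vec j b)" for a b
      using m(1) j_range GL_D(1)[OF g] by (intro mat_mult_column_op_apply) (auto simp: basis_vec_def)
    have h: "?h \<in> GL n" using g m(1) mj by (intro column_op_GL) (auto simp: basis_vec_def)
    have col_i': "?h a i = basis_vec 1 a" if "a \<in> {1..n}" for a
      unfolding entry using col_i[OF that] i_ne_j by (simp add: basis_vec_def)
    have "XH_cond n i j ?h" unfolding XH_cond_def
    proof (intro conjI ballI)
      show "minv n ?h a 1 = 0" if "a \<in> {i<..n}" for a
        using that i_range col_i' by (intro minv_col1_eq_0_if_col_e1[OF h i_range]) (auto simp: basis_vec_def)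
      show "?h n l = 0" if "l \<in> {1..<j}" for l
        unfolding entry using that C by (simp add: basis_vec_def XH_cond_def)
    qed
    moreover have "?h n j \<noteq> 0" unfolding entry using nj m t by (simp add: basis_vec_def)
    ultimately show "?h \<in> double_coset_closure n w"
      using double_coset_closure_if_col_i_e1_entry_nj[OF h _ col_i'] by blast
  qed
qed

lemma double_coset_closure_if_minv_i1_nonzero:
  assumes g: "g \<in> GL n" and C: "XH_cond n i j g" and u: "minv n g i 1 \<noteq> 0"
  shows "g \<in> double_coset_closure n w"
proof -
  define v where "v = (\<lambda>a. if a \<in> {1..n} then minv n g a 1 - basis_vec i a else 0)"
  define P where "P = id_plus_outer n v (basis_vec i)"
  have "dot n (basis_vec i) v = v i" by (rule dot_basis_vec_left[OF i_range])
  then have "1 + dot n (basis_vec i) v \<noteq> 0" using i_range u by (simp add: v_def basis_vec_def)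
  moreover have "v a * basis_vec i b = 0" if "b < a" for a b
    using C that by (auto simp: v_def basis_vec_def XH_cond_def)
  ultimately have PB: "P \<in> Borel n" unfolding P_def by (intro id_plus_outer_Borel)
  have "mat_mult n g P a i = basis_vec 1 a" if a: "a \<in> {1..n}" for a
  proof -
    have "(\<Sum>c=1..n. g a c * v c) = (\<Sum>c=1..n. g a c * minv n g c 1) - (\<Sum>c=1..n. g a c * basis_vec i c)"
      by (simp add: v_def algebra_simps sum_subtractf)
    also have "\<dots> = basis_vec 1 a - g a i"
    proof -
      have "(\<Sum>c=1..n. g a c * minv n g c 1) = basis_vec 1 a"
        using GL_D(3)[OF g] a one_in_range by (simp add: mat_mult_apply[symmetric] idm_def basis_vec_def)
      moreover have "(\<Sum>c=1..n. g a c * basis_vec i c) = g a i" by (rule sum_mult_basis_vec[OF i_range])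
      ultimately show ?thesis by simp
    qed
    finally show ?thesis
      using a i_range by (simp add: P_def mat_mult_id_plus_outer_apply basis_vec_def)
  qed
  then have "mat_mult n g P \<in> double_coset_closure n w"
    using XH_cond_mult_Borel[OF g PB C] g Borel_D(1)[OF PB]
    by (intro double_coset_closure_if_col_i_e1 GL_mat_mult)
  then show ?thesis using PB g by (rule double_coset_closure_cancel_right)
qed

text \<open>If \<open>minv n g i 1 = 0\<close>, moving \<open>g\<close> along the direction \<open>g v e\<^sub>m\<^sup>T\<close> makes that entry
  nonzero; the hypotheses on \<open>v\<close> keep \<open>XH_cond\<close> valid along the way.\<close>

lemma double_coset_closure_by_raising_minv_i1:
  assumes g: "g \<in> GL n" and C: "XH_cond n i j g" and u_i: "minv n g i 1 = 0"
    and m: "m \<in> {1..n}" "minv n g m 1 \<noteq> 0"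
    and v: "\<And>a. v a \<noteq> 0 \<Longrightarrow> a \<in> {1..i}" "v i = 1" "v m = 0"
    and v_row_n: "m < j \<Longrightarrow> (\<Sum>c=1..n. g n c * v c) = 0"
  shows "g \<in> double_coset_closure n w"
proof (rule double_coset_closure_perturb[OF g, where v = v and x = "basis_vec m"])
  fix t :: real assume t: "t \<noteq> 0"
  let ?x = "\<lambda>b. complex_of_real t * basis_vec m b"
  let ?h = "mat_mult n g (id_plus_outer n v ?x)"
  have d: "dot n ?x v = 0" using m(1) v(3) by (simp add: dot_def sum_distrib_left[symmetric]
      mult.assoc sum_basis_vec_mult)
  have h: "?h \<in> GL n" using g d by (intro GL_mat_mult id_plus_outer_GL) simp_all
  have u: "minv n ?h a 1 = minv n g a 1 - v a * complex_of_real t * minv n g m 1" if "a \<in> {1..n}" for a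
    using minv_mult_transvection_apply[OF g d that one_in_range] m(1)
    by (simp add: mult.assoc sum_distrib_left[symmetric] sum_basis_vec_mult)
  have "XH_cond n i j ?h" unfolding XH_cond_def
  proof (intro conjI ballI)
    fix a assume a: "a \<in> {i<..n}"
    then have "v a = 0" using v(1) by force
    then show "minv n ?h a 1 = 0" using u[of a] a C i_range by (simp add: XH_cond_def)
  next
    fix l assume l: "l \<in> {1..<j}"
    then have "?h n l = g n l + (\<Sum>c=1..n. g n c * v c) * ?x l"
      using n_in_range j_range by (intro mat_mult_id_plus_outer_apply) auto
    then show "?h n l = 0" using C l v_row_n by (cases "l = m") (auto simp: XH_cond_def basis_vec_def)
  qed
  moreover have "minv n ?h i 1 \<noteq> 0" using u[OF i_range] u_i v(2) m(2) t by simp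
  ultimately show "?h \<in> double_coset_closure n w" by (rule double_coset_closure_if_minv_i1_nonzero[OF h])
qed

lemma double_coset_closure_if_minv_m1_nonzero:
  assumes g: "g \<in> GL n" and C: "XH_cond n i j g" and u_i: "minv n g i 1 = 0"
    and m: "m \<in> {1..n}" "minv n g m 1 \<noteq> 0"
    and row_n_cases: "j \<le> m \<or> g n i = 0 \<or> (\<exists>p\<in>{1..<i}. g n p \<noteq> 0)"
  shows "g \<in> double_coset_closure n w"
proof -
  have mi: "m \<noteq> i" using m u_i by auto
  show ?thesis
  proof (cases "j \<le> m \<or> g n i = 0")
    case True
    show ?thesis
    proof (rule double_coset_closure_by_raising_minv_i1[OF g C u_i m, where v = "basis_vec i"])
      show "(\<Sum>c=1..n. g n c * basis_vec i c) = 0" if "m < j"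
        using that True i_range by (simp add: sum_mult_basis_vec)
    qed (use i_range mi in \<open>auto simp: basis_vec_def split: if_splits\<close>)
  next
    case False
    then obtain p where p: "p \<in> {1..<i}" "g n p \<noteq> 0" using row_n_cases by blast
    have "j \<le> p" using C p by (auto simp: XH_cond_def not_less[symmetric])
    then have m_ne_p: "m \<noteq> p" using False by simp
    have pI: "p \<in> {1..n}" using p i_range by auto
    let ?v = "\<lambda>a. basis_vec i a - g n i / g n p * basis_vec p a"
    show ?thesis
    proof (rule double_coset_closure_by_raising_minv_i1[OF g C u_i m, where v = ?v])
      have "(\<Sum>c=1..n. g n c * ?v c) =
          (\<Sum>c=1..n. g n c * basis_vec i c) - g n i / g n p * (\<Sum>c=1..n. g n c * basis_vec p c)"
        by (simp add: algebra_simps sum_subtractf sum_distrib_left)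
      also have "\<dots> = g n i - g n i / g n p * g n p" using i_range pI by (simp add: sum_mult_basis_vec)
      finally show "(\<Sum>c=1..n. g n c * ?v c) = 0" using p(2) by simp
    qed (use i_range p mi m_ne_p in \<open>auto simp: basis_vec_def split: if_splits\<close>)
  qed
qed

text \<open>Adding a small multiple of column \<open>i\<close> to column \<open>j\<close> produces a nonzero entry \<open>(n, j)\<close>
  left of column \<open>i\<close> without changing the first column of the inverse.\<close>

lemma double_coset_closure_by_raising_entry_nj:
  assumes g: "g \<in> GL n" and C: "XH_cond n i j g" and u_i: "minv n g i 1 = 0"
    and m: "m \<in> {1..n}" "minv n g m 1 \<noteq> 0" and u_j: "minv n g j 1 = 0"
    and ji: "j < i" and ni: "g n i \<noteq> 0" and nj: "g n j = 0"
  shows "g \<in> double_coset_closure n w"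
proof (rule double_coset_closure_perturb[OF g, where v = "basis_vec i" and x = "basis_vec j"])
  fix s :: real assume s: "s \<noteq> 0"
  let ?x = "\<lambda>b. complex_of_real s * basis_vec j b"
  let ?h = "mat_mult n g (id_plus_outer n (basis_vec i) ?x)"
  have d: "dot n ?x (basis_vec i) = 0"
    using i_range i_ne_j by (simp add: dot_basis_vec_right) (simp add: basis_vec_def)
  have h: "?h \<in> GL n" using g d by (intro GL_mat_mult id_plus_outer_GL) simp_all
  have u: "minv n ?h a 1 = minv n g a 1" if "a \<in> {1..n}" for a
    using minv_mult_transvection_apply[OF g d that one_in_range] j_range u_j
    by (simp add: mult.assoc sum_distrib_left[symmetric] sum_basis_vec_mult)
  have entry: "?h a b = g a b + g a i * ?x b" for a b
    using i_range j_range GL_D(1)[OF g] by (intro mat_mult_column_op_apply) (auto simp: basis_vec_def)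
  have "XH_cond n i j ?h" unfolding XH_cond_def
  proof (intro conjI ballI)
    show "minv n ?h a 1 = 0" if "a \<in> {i<..n}" for a
      using that u[of a] C i_range by (simp add: XH_cond_def)
    show "?h n l = 0" if "l \<in> {1..<j}" for l
      unfolding entry using that C by (simp add: XH_cond_def basis_vec_def)
  qed
  moreover have "minv n ?h i 1 = 0" "minv n ?h m 1 \<noteq> 0" using u i_range m u_i by auto
  moreover have "?h n j \<noteq> 0" unfolding entry using nj ni s by (simp add: basis_vec_def)
  then have "\<exists>p\<in>{1..<i}. ?h n p \<noteq> 0" using j_range ji by auto
  ultimately show "?h \<in> double_coset_closure n w"
    using double_coset_closure_if_minv_m1_nonzero[OF h _ _ m(1)] by blast
qed

lemma double_coset_closure_if_XH_cond:
  assumes g: "g \<in> GL n" and C: "XH_cond n i j g"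
  shows "g \<in> double_coset_closure n w"
proof (cases "minv n g i 1 = 0")
  case False then show ?thesis by (rule double_coset_closure_if_minv_i1_nonzero[OF g C])
next
  case u_i: True
  obtain m where m: "m \<in> {1..n}" "minv n g m 1 \<noteq> 0" using minv_col1_nonzero[OF g] n_ge_2 by auto
  show ?thesis
  proof (cases "j \<le> m \<or> g n i = 0 \<or> (\<exists>p\<in>{1..<i}. g n p \<noteq> 0)")
    case True then show ?thesis by (rule double_coset_closure_if_minv_m1_nonzero[OF g C u_i m])
  next
    case False
    then have ni: "g n i \<noteq> 0" and "m < j" by auto
    then have ji: "j < i" using C i_range i_ne_j by (auto simp: XH_cond_def not_less[symmetric])
    then have nj: "g n j = 0" using False j_range by auto
    show ?thesis
    proof (cases "minv n g j 1 = 0")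
      case False
      then show ?thesis by (rule double_coset_closure_if_minv_m1_nonzero[OF g C u_i j_range]) simp
    next
      case True
      then show ?thesis by (rule double_coset_closure_by_raising_entry_nj[OF g C u_i m _ ji ni nj])
    qed
  qed
qed

lemma XH_cond_set_eq_double_coset_closure:
  "{g \<in> GL n. XH_cond n i j g} = double_coset_closure n w"
  using double_coset_closure_if_XH_cond double_coset_closure_XH_cond
  by (auto simp: double_coset_closure_def)

end

theorem mainTheorem3:
  fixes n i j :: nat
  assumes "n \<ge> 2" and "i \<in> {1..n}" and "j \<in> {1..n}" and "i \<noteq> j"
  shows "XH n (Hsp n i j) = Schubert n (w_ij n i j)"
proof -
  interpret Hij_Schubert n i j using assms by unfold_locales
  show ?thesis
    using XH_Hsp_eq_image XH_cond_set_eq_double_coset_closure Schubert_eq_image[OF w_GL] by simp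
qed

end
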